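(* Let $\mathcal{B},\mathcal{B}'$ be differential bigraded algebras over $\mathcal{I}$, let $\widehat{A},\widehat{A}'$ be differential bigraded right $\mathcal{B}$-modules, each free over $\mathbb{Z}$ with a basis of bigrading-homogeneous elements having unique right idempotents, and let $\widehat{DD}$ be a rank-one Type DD bimodule over $\mathcal{B}$ and $\mathcal{B}'$ with $\delta_{DD}(1)=\sum_sa_s\otimes c_s^{op}$. Let $F:\widehat{A}\to\widehat{A}'$ be an $\mathcal{A}_\infty$-morphism with $F_n=0$ for $n>2$. Define $F\boxtimes\mathrm{id}_{DD}:\widehat{A}\to\mathcal{B}'\otimes_{\mathcal{I}}\widehat{A}'$ by \[ (F\boxtimes\mathrm{id}_{DD})(x)=1\otimes F_1(x)+\sum_s(-1)^{\deg_h(c_s)\,(1+\deg_h F_2(x\otimes a_s))}\,c_s\otimes F_2(x\otimes a_s). \] Then $F\boxtimes\mathrm{id}_{DD}$ is a morphism of Type D structures from $\widehat{A}\boxtimes\widehat{DD}$ to $\widehat{A}'\boxtimes\widehat{DD}$.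
   Context: $\mathcal{I}=\mathbb{Z}e_1\times\cdots\times\mathbb{Z}e_k$. Differential bigraded algebras over $\mathcal{I}$: unital associative, bigraded (intrinsic, homological $=\deg_h$), degree-$(0,0)$ part $\mathcal{I}$, differential $\mu_1$ of bidegree $(0,1)$, $\mu_1^2=0$, $\mu_1(xy)=(-1)^{\deg_hy}\mu_1(x)y+x\mu_1(y)$; multiplication $\mu_2$. Right dg module: differential $m_1$ of bidegree $(0,1)$, $m_1^2=0$, $m_1(xb)=(-1)^{\deg_hb}m_1(x)b+x\mu_1(b)$; action $m_2$ (primes for $\widehat{A}'$). $|\mathrm{id}|$ multiplies by $(-1)^{\deg_h}$. Rank-one Type DD bimodule: $\widehat{DD}=\mathcal{I}$ with $\mathcal{I}$-bilinear $\delta_{DD}:\mathcal{I}\to\mathcal{B}\otimes_{\mathcal{I}}(\mathcal{B}')^{op}$ of bidegree $(0,1)$ satisfying, for $\delta_{DD}(1)=\sum_sa_s\otimes c_s^{op}$: $\sum_s(-1)^{\deg_hc_s}\mu_1(a_s)\otimes c_s^{op}+\sum_sa_s\otimes\mu_1(c_s)^{op}+\sum_{s,t}(-1)^{\deg_h(a_t)\deg_h(c_s)}a_sa_t\otimes c_t^{op}c_s^{op}=0$. The Type D structure $\widehat{A}\boxtimes\widehat{DD}$ over $\mathcal{B}'$ is $\widehat{A}$ (as left $\mathcal{I}$-module via its right action) with $\delta(x)=1\otimes m_1(x)+\sum_s(-1)^{\deg_h(xa_s)\deg_h(c_s)}c_s\otimes xa_s$; similarly for $\widehat{A}'$ with $\delta'$.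 An $\mathcal{A}_\infty$-morphism $F$ with $F_n=0$ for $n>2$ consists of a bigrading-preserving $\mathcal{I}$-linear $F_1:\widehat{A}\to\widehat{A}'$ and an $\mathcal{I}$-linear $F_2:\widehat{A}\otimes_{\mathcal{I}}\mathcal{B}\to\widehat{A}'$ preserving intrinsic degree and lowering homological degree by $1$, with $m_1'F_1=F_1m_1$; $m_1'F_2+m_2'(F_1\otimes\mathrm{id})=F_1m_2-F_2(m_1\otimes|\mathrm{id}|)-F_2(\mathrm{id}\otimes\mu_1)$; $-m_2'(F_2\otimes|\mathrm{id}|)=F_2(m_2\otimes\mathrm{id})-F_2(\mathrm{id}\otimes\mu_2)$. A morphism of Type D structures $(D,\delta)\to(D',\delta')$ over $\mathcal{B}'$ is a bigrading-preserving $\mathcal{I}$-linear $\Phi:D\to\mathcal{B}'\otimes_{\mathcal{I}}D'$ with $(\mu_1\otimes|\mathrm{id}|)\Phi=(\mu_2\otimes\mathrm{id})(\mathrm{id}\otimes\Phi)\delta-(\mu_2\otimes\mathrm{id})(\mathrm{id}\otimes\delta')\Phi$. *)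

theory Defs
  imports Main
begin

definition zsc :: "int \<Rightarrow> 'a::ab_group_add \<Rightarrow> 'a" where
  "zsc n x = (if 0 \<le> n then (\<Sum>_\<in>{..<nat n}. x) else - (\<Sum>_\<in>{..<nat (- n)}. x))"

definition sg :: "int \<Rightarrow> 'a::ab_group_add \<Rightarrow> 'a" where
  "sg n x = (if even n then x else - x)"

(* X x q h : x is homogeneous of bidegree (q,h) = (intrinsic, homological).
   A bigrading is a direct sum decomposition into the subgroups X_(q,h). *)
definition bigraded_group :: "('a::ab_group_add \<Rightarrow> int \<Rightarrow> int \<Rightarrow> bool) \<Rightarrow> bool" where
  "bigraded_group X \<longleftrightarrow>
     (\<forall>q h. X 0 q h) \<and>
     (\<forall>x y q h. X x q h \<longrightarrow> X y q h \<longrightarrow> X (x + y) q h) \<and>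
     (\<forall>x q h. X x q h \<longrightarrow> X (- x) q h) \<and>
     (\<forall>x. \<exists>D f. finite D \<and> (\<forall>d\<in>D. X (f d) (fst d) (snd d)) \<and> x = sum f D) \<and>
     (\<forall>D f. finite D \<longrightarrow> (\<forall>d\<in>D. X (f d) (fst d) (snd d)) \<longrightarrow> sum f D = 0
        \<longrightarrow> (\<forall>d\<in>D. f d = 0))"

(* homological degree of a (nonzero) homogeneous element *)
definition hd :: "('a \<Rightarrow> int \<Rightarrow> int \<Rightarrow> bool) \<Rightarrow> 'a \<Rightarrow> int" where
  "hd X x = (THE h. \<exists>q. X x q h)"

record 'b dgba =
  bmul :: "'b \<Rightarrow> 'b \<Rightarrow> 'b"
  bone :: 'b
  bdif :: "'b \<Rightarrow> 'b"
  bidm :: "nat \<Rightarrow> 'b"            (* e_i, indices i < k *)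
  bdeg :: "'b \<Rightarrow> int \<Rightarrow> int \<Rightarrow> bool"

record ('a, 'b) dgmod =
  mact :: "'a \<Rightarrow> 'b \<Rightarrow> 'a"
  mdif :: "'a \<Rightarrow> 'a"
  mdeg :: "'a \<Rightarrow> int \<Rightarrow> int \<Rightarrow> bool"

(* differential bigraded algebra over I = Z e_0 x ... x Z e_(k-1) *)
definition dg_algebra :: "nat \<Rightarrow> ('b::ab_group_add) dgba \<Rightarrow> bool" where
  "dg_algebra k B \<longleftrightarrow>
     bigraded_group (bdeg B) \<and>
     (\<forall>x y z. bmul B (x + y) z = bmul B x z + bmul B y z) \<and>
     (\<forall>x y z. bmul B x (y + z) = bmul B x y + bmul B x z) \<and>
     (\<forall>x y z. bmul B (bmul B x y) z = bmul B x (bmul B y z)) \<and>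
     (\<forall>x. bmul B (bone B) x = x \<and> bmul B x (bone B) = x) \<and>
     (\<forall>x y q h q' h'. bdeg B x q h \<longrightarrow> bdeg B y q' h' \<longrightarrow> bdeg B (bmul B x y) (q + q') (h + h')) \<and>
     (\<forall>i<k. bdeg B (bidm B i) 0 0) \<and>
     (\<forall>i<k. \<forall>j<k. bmul B (bidm B i) (bidm B j) = (if i = j then bidm B i else 0)) \<and>
     bone B = (\<Sum>i<k. bidm B i) \<and>
     (\<forall>x. bdeg B x 0 0 \<longleftrightarrow> (\<exists>n. x = (\<Sum>i<k. zsc (n i) (bidm B i)))) \<and>
     (\<forall>n. (\<Sum>i<k. zsc (n i) (bidm B i)) = 0 \<longrightarrow> (\<forall>i<k. n i = 0)) \<and>
     (\<forall>x y. bdif B (x + y) = bdif B x + bdif B y) \<and>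
     (\<forall>x q h. bdeg B x q h \<longrightarrow> bdeg B (bdif B x) q (h + 1)) \<and>
     (\<forall>x. bdif B (bdif B x) = 0) \<and>
     (\<forall>x y q h. bdeg B y q h \<longrightarrow>
        bdif B (bmul B x y) = sg h (bmul B (bdif B x) y) + bmul B x (bdif B y))"

definition dg_module :: "nat \<Rightarrow> ('b::ab_group_add) dgba \<Rightarrow> ('a::ab_group_add, 'b) dgmod \<Rightarrow> bool" where
  "dg_module k B M \<longleftrightarrow>
     bigraded_group (mdeg M) \<and>
     (\<forall>x y b. mact M (x + y) b = mact M x b + mact M y b) \<and>
     (\<forall>x b c. mact M x (b + c) = mact M x b + mact M x c) \<and>
     (\<forall>x b c. mact M x (bmul B b c) = mact M (mact M x b) c) \<and>
     (\<forall>x. mact M x (bone B) = x) \<and>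
     (\<forall>x b q h q' h'. mdeg M x q h \<longrightarrow> bdeg B b q' h' \<longrightarrow> mdeg M (mact M x b) (q + q') (h + h')) \<and>
     (\<forall>x y. mdif M (x + y) = mdif M x + mdif M y) \<and>
     (\<forall>x q h. mdeg M x q h \<longrightarrow> mdeg M (mdif M x) q (h + 1)) \<and>
     (\<forall>x. mdif M (mdif M x) = 0) \<and>
     (\<forall>x b q h. bdeg B b q h \<longrightarrow>
        mdif M (mact M x b) = sg h (mact M (mdif M x) b) + mact M x (bdif B b))"

definition free_homog_basis :: "nat \<Rightarrow> ('b::ab_group_add) dgba \<Rightarrow> ('a::ab_group_add, 'b) dgmod \<Rightarrow> bool" where
  "free_homog_basis k B M \<longleftrightarrow>
     (\<exists>S. (\<forall>s\<in>S. \<exists>q h. mdeg M s q h) \<and>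
          (\<forall>s\<in>S. \<exists>!i. i < k \<and> mact M s (bidm B i) = s) \<and>
          (\<forall>x. \<exists>!c. finite {s. c s \<noteq> 0} \<and> {s. c s \<noteq> 0} \<subseteq> S \<and>
                  x = (\<Sum>s\<in>{s. c s \<noteq> 0}. zsc (c s) s)))"

(* Tensor products over I, presented by generators and relations:
   a formal list of pairs [(m1,n1),...] stands for  m1 (x) n1 + ... ;
   ra = right I-action on the left factor, la = left I-action on the right factor. *)
definition ind :: "'x \<Rightarrow> 'x \<Rightarrow> int" where
  "ind p = (\<lambda>q. if q = p then 1 else 0)"

inductive_set trel :: "nat \<Rightarrow> ('m::ab_group_add \<Rightarrow> nat \<Rightarrow> 'm) \<Rightarrow> (nat \<Rightarrow> 'n::ab_group_add \<Rightarrow> 'n)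
                        \<Rightarrow> ('m \<times> 'n \<Rightarrow> int) set"
  for k ra la where
  zero: "(\<lambda>_. 0) \<in> trel k ra la"
| addl: "(\<lambda>p. ind (m + m', n) p - ind (m, n) p - ind (m', n) p) \<in> trel k ra la"
| addr: "(\<lambda>p. ind (m, n + n') p - ind (m, n) p - ind (m, n') p) \<in> trel k ra la"
| bal: "i < k \<Longrightarrow> (\<lambda>p. ind (ra m i, n) p - ind (m, la i n) p) \<in> trel k ra la"
| plus: "f \<in> trel k ra la \<Longrightarrow> g \<in> trel k ra la \<Longrightarrow> (\<lambda>p. f p + g p) \<in> trel k ra la"
| neg: "f \<in> trel k ra la \<Longrightarrow> (\<lambda>p. - f p) \<in> trel k ra la"

definition fsum :: "('x \<times> 'y) list \<Rightarrow> ('x \<times> 'y \<Rightarrow> int)" where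
  "fsum xs = (\<lambda>p. int (count_list xs p))"

definition teq :: "nat \<Rightarrow> ('m::ab_group_add \<Rightarrow> nat \<Rightarrow> 'm) \<Rightarrow> (nat \<Rightarrow> 'n::ab_group_add \<Rightarrow> 'n)
                    \<Rightarrow> ('m \<times> 'n) list \<Rightarrow> ('m \<times> 'n) list \<Rightarrow> bool" where
  "teq k ra la xs ys \<longleftrightarrow> (\<lambda>p. fsum xs p - fsum ys p) \<in> trel k ra la"

definition tneg :: "('m::ab_group_add \<times> 'n) list \<Rightarrow> ('m \<times> 'n) list" where
  "tneg xs = map (\<lambda>(m, n). (- m, n)) xs"

(* Rank-one Type DD bimodule: delta_DD(1) = sum_s a_s (x) c_s^op, given as the list ds of (a_s, c_s),
   equality taken in B (x)_I (B')^op, where a e (x) c^op = a (x) (c e)^op. *)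
definition rank_one_DD :: "nat \<Rightarrow> ('b::ab_group_add) dgba \<Rightarrow> ('c::ab_group_add) dgba \<Rightarrow> ('b \<times> 'c) list \<Rightarrow> bool" where
  "rank_one_DD k B B' ds \<longleftrightarrow>
     (let ra = (\<lambda>a i. bmul B a (bidm B i)); la = (\<lambda>i c. bmul B' c (bidm B' i)) in
     (\<forall>(a, c)\<in>set ds. \<exists>qa ha qc hc. bdeg B a qa ha \<and> bdeg B' c qc hc \<and> qa + qc = 0 \<and> ha + hc = 1) \<and>
     (\<forall>i<k. teq k ra la (map (\<lambda>(a, c). (bmul B (bidm B i) a, c)) ds)
                         (map (\<lambda>(a, c). (a, bmul B' (bidm B' i) c)) ds)) \<and>
     teq k ra la
       (map (\<lambda>(a, c). (sg (hd (bdeg B') c) (bdif B a), c)) ds @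
        map (\<lambda>(a, c). (a, bdif B' c)) ds @
        concat (map (\<lambda>(a, c). map (\<lambda>(a', c').
            (sg (hd (bdeg B) a' * hd (bdeg B') c) (bmul B a a'), bmul B' c c')) ds) ds))
       [])"

(* A-infinity morphism F : M -> M' with F_n = 0 for n > 2; F2 is the I-balanced biadditive map
   representing the map on M (x)_I B *)
definition ainf_morphism :: "nat \<Rightarrow> ('b::ab_group_add) dgba \<Rightarrow> ('a::ab_group_add, 'b) dgmod
      \<Rightarrow> ('d::ab_group_add, 'b) dgmod \<Rightarrow> ('a \<Rightarrow> 'd) \<Rightarrow> ('a \<Rightarrow> 'b \<Rightarrow> 'd) \<Rightarrow> bool" where
  "ainf_morphism k B M M' F1 F2 \<longleftrightarrow>
     (\<forall>x y. F1 (x + y) = F1 x + F1 y) \<and>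
     (\<forall>x q h. mdeg M x q h \<longrightarrow> mdeg M' (F1 x) q h) \<and>
     (\<forall>x. \<forall>i<k. F1 (mact M x (bidm B i)) = mact M' (F1 x) (bidm B i)) \<and>
     (\<forall>x y b. F2 (x + y) b = F2 x b + F2 y b) \<and>
     (\<forall>x b c. F2 x (b + c) = F2 x b + F2 x c) \<and>
     (\<forall>x b. \<forall>i<k. F2 (mact M x (bidm B i)) b = F2 x (bmul B (bidm B i) b)) \<and>
     (\<forall>x b. \<forall>i<k. F2 x (bmul B b (bidm B i)) = mact M' (F2 x b) (bidm B i)) \<and>
     (\<forall>x b q h q' h'. mdeg M x q h \<longrightarrow> bdeg B b q' h' \<longrightarrow> mdeg M' (F2 x b) (q + q') (h + h' - 1)) \<and>
     (\<forall>x. mdif M' (F1 x) = F1 (mdif M x)) \<and>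
     (\<forall>x b q h. bdeg B b q h \<longrightarrow>
        mdif M' (F2 x b) + mact M' (F1 x) b
          = F1 (mact M x b) - F2 (mdif M x) (sg h b) - F2 x (bdif B b)) \<and>
     (\<forall>x b b' q h. bdeg B b' q h \<longrightarrow>
        - mact M' (F2 x b) (sg h b') = F2 (mact M x b) b' - F2 x (bmul B b b'))"

definition boxD :: "('c::ab_group_add) dgba \<Rightarrow> ('a::ab_group_add, 'b) dgmod \<Rightarrow> ('b \<times> 'c) list
                    \<Rightarrow> 'a \<Rightarrow> ('c \<times> 'a) list" where
  "boxD B' M ds x =
     (bone B', mdif M x) #
     map (\<lambda>(a, c). (sg (hd (mdeg M) (mact M x a) * hd (bdeg B') c) c, mact M x a)) ds"

definition Fbox :: "('c::ab_group_add) dgba \<Rightarrow> ('d::ab_group_add, 'b) dgmod \<Rightarrow> ('b \<times> 'c) list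
                    \<Rightarrow> ('a \<Rightarrow> 'd) \<Rightarrow> ('a \<Rightarrow> 'b \<Rightarrow> 'd) \<Rightarrow> 'a \<Rightarrow> ('c \<times> 'd) list" where
  "Fbox B' M' ds F1 F2 x =
     (bone B', F1 x) #
     map (\<lambda>(a, c). (sg (hd (bdeg B') c * (1 + hd (mdeg M') (F2 x a))) c, F2 x a)) ds"

(* Morphism of Type D structures (D = M, delta) -> (D' = M', delta') over B', where M, M' are
   left I-modules via their right I-actions; Phi is given on homogeneous elements with values in
   B' (x)_I M' (formal lists). *)
definition typeD_morphism :: "nat \<Rightarrow> ('b::ab_group_add) dgba \<Rightarrow> ('c::ab_group_add) dgba
      \<Rightarrow> ('a::ab_group_add, 'b) dgmod \<Rightarrow> ('d::ab_group_add, 'b) dgmod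
      \<Rightarrow> ('a \<Rightarrow> ('c \<times> 'a) list) \<Rightarrow> ('d \<Rightarrow> ('c \<times> 'd) list) \<Rightarrow> ('a \<Rightarrow> ('c \<times> 'd) list) \<Rightarrow> bool" where
  "typeD_morphism k B B' M M' \<delta> \<delta>' \<Phi> \<longleftrightarrow>
     (let ra = (\<lambda>c i. bmul B' c (bidm B' i)); la = (\<lambda>i y. mact M' y (bidm B i)) in
     (\<forall>x y q h. mdeg M x q h \<longrightarrow> mdeg M y q h \<longrightarrow> teq k ra la (\<Phi> (x + y)) (\<Phi> x @ \<Phi> y)) \<and>
     (\<forall>x q h. \<forall>i<k. mdeg M x q h \<longrightarrow>
        teq k ra la (\<Phi> (mact M x (bidm B i))) (map (\<lambda>(b, z). (bmul B' (bidm B' i) b, z)) (\<Phi> x))) \<and>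
     (\<forall>x q h. mdeg M x q h \<longrightarrow> (\<forall>(b, z)\<in>set (\<Phi> x).
        \<exists>q1 h1 q2 h2. bdeg B' b q1 h1 \<and> mdeg M' z q2 h2 \<and> q1 + q2 = q \<and> h1 + h2 = h)) \<and>
     (\<forall>x q h. mdeg M x q h \<longrightarrow>
        teq k ra la
          (map (\<lambda>(b, z). (bdif B' b, sg (hd (mdeg M') z) z)) (\<Phi> x))
          (concat (map (\<lambda>(c, y). map (\<lambda>(b, z). (bmul B' c b, z)) (\<Phi> y)) (\<delta> x)) @
           tneg (concat (map (\<lambda>(b, z). map (\<lambda>(c, w). (bmul B' b c, w)) (\<delta>' z)) (\<Phi> x))))))"

end

(*
  Both sides of the structure equation for F \<boxtimes> id_DD are expanded into sums over the terms
  a_s \<otimes> c_s of \<delta>_DD(1).  The constant terms cancel because F_1 is a chain map.  The terms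
  linear in \<delta>_DD are rewritten by the A\<infinity>-relation involving m_1' F_2, and the quadratic ones by
  the relation involving m_2' (F_2 \<otimes> id); what is left is the image of the structure equation
  of \<delta>_DD under the balanced biadditive map a \<otimes> c \<mapsto> (-1)^((n+1) deg_h c) c \<otimes> F_2(x \<otimes> a),
  hence zero.  That this map is additive in c rests on the grading involution (-1)^deg_h
  being additive, i.e. on the uniqueness of homogeneous decompositions.
*)

theory Submission
  imports Defs "HOL-Library.Function_Algebras" "HOL.Modules"
begin

section \<open>Formal sums modulo the tensor relations\<close>

lemma sum_list_concat: "sum_list (concat xss) = sum_list (map sum_list xss :: 'a::monoid_add list)"
  by (induction xss) simp_all

lemma sum_list_negf: "sum_list (map (\<lambda>x. - f x) xs) = - sum_list (map f xs :: 'a::ab_group_add list)"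
  by (induction xs) simp_all

lemma fsum_Nil [simp]: "fsum [] = 0"
  by (simp add: fsum_def fun_eq_iff)

lemma fsum_Cons: "fsum (x # xs) = ind x + fsum xs"
  by (auto simp: fsum_def ind_def fun_eq_iff)

lemma fsum_append: "fsum (xs @ ys) = fsum xs + fsum ys"
  by (auto simp: fsum_def fun_eq_iff)

lemma fsum_conv_sum_list: "fsum xs = sum_list (map ind xs)"
  by (induction xs) (simp_all add: fsum_Cons)

lemma fsum_concat: "fsum (concat xss) = sum_list (map fsum xss)"
  by (induction xss) (simp_all add: fsum_append)

lemma fsum_map: "fsum (map f xs) = sum_list (map (\<lambda>x. ind (f x)) xs)"
  by (simp add: fsum_conv_sum_list o_def)

lemma trel_zero: "0 \<in> trel k ra la"
  using trel.zero[of k ra la] by (simp add: zero_fun_def)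

lemma trel_add: "f \<in> trel k ra la \<Longrightarrow> g \<in> trel k ra la \<Longrightarrow> f + g \<in> trel k ra la"
  using trel.plus[of f k ra la g] by (simp add: plus_fun_def)

lemma trel_neg: "f \<in> trel k ra la \<Longrightarrow> - f \<in> trel k ra la"
  using trel.neg[of f k ra la] by (simp add: fun_Compl_def)

lemma trel_addl: "ind (m + m', n) - ind (m, n) - ind (m', n) \<in> trel k ra la"
  using trel.addl[of m m' n k ra la] by (simp add: fun_diff_def)

lemma trel_addr: "ind (m, n + n') - ind (m, n) - ind (m, n') \<in> trel k ra la"
  using trel.addr[of m n n' k ra la] by (simp add: fun_diff_def)

lemma trel_bal: "i < k \<Longrightarrow> ind (ra m i, n) - ind (m, la i n) \<in> trel k ra la"
  using trel.bal[of i k ra m n la] by (simp add: fun_diff_def)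

lemma trel_sum_list:
  "(\<And>x. x \<in> set xs \<Longrightarrow> f x \<in> trel k ra la) \<Longrightarrow> sum_list (map f xs) \<in> trel k ra la"
  by (induction xs) (auto intro: trel_zero trel_add)

lemma trel_sg: "f \<in> trel k ra la \<Longrightarrow> sg e f \<in> trel k ra la"
  by (simp add: sg_def trel_neg)

lemma finite_support_ind: "finite {q. ind p q \<noteq> 0}"
  by (rule finite_subset[of _ "{p}"]) (auto simp: ind_def)

lemma finite_support_add:
  "finite {p. f p \<noteq> 0} \<Longrightarrow> finite {p. g p \<noteq> 0} \<Longrightarrow> finite {p. (f + g :: _ \<Rightarrow> int) p \<noteq> 0}"
  by (rule finite_subset[of _ "{p. f p \<noteq> 0} \<union> {p. g p \<noteq> 0}"]) auto

lemma finite_support_diff: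
  "finite {p. f p \<noteq> 0} \<Longrightarrow> finite {p. g p \<noteq> 0} \<Longrightarrow> finite {p. (f - g :: _ \<Rightarrow> int) p \<noteq> 0}"
  by (rule finite_subset[of _ "{p. f p \<noteq> 0} \<union> {p. g p \<noteq> 0}"]) auto

lemma finite_support_sum_list: "finite {p. sum_list (map ind xs) p \<noteq> 0}"
proof (induction xs)
  case (Cons x xs)
  then show ?case using finite_support_add[OF finite_support_ind] by simp
qed simp

lemma finite_support_trel: "f \<in> trel k ra la \<Longrightarrow> finite {p. f p \<noteq> 0}"
proof (induction rule: trel.induct)
  case (addl m m' n)
  show ?case by (rule finite_subset[of _ "{(m + m', n), (m, n), (m', n)}"]) (auto simp: ind_def)
next
  case (addr m n n')
  show ?case by (rule finite_subset[of _ "{(m, n + n'), (m, n), (m, n')}"]) (auto simp: ind_def)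
next
  case (bal i m n)
  show ?case by (rule finite_subset[of _ "{(ra m i, n), (m, la i n)}"]) (auto simp: ind_def)
next
  case (plus f g)
  then show ?case using finite_support_add[of f g] by (simp add: plus_fun_def)
qed simp_all

definition lin_ext :: "('p \<Rightarrow> ('q \<Rightarrow> int)) \<Rightarrow> ('p \<Rightarrow> int) \<Rightarrow> ('q \<Rightarrow> int)" where
  "lin_ext G f = (\<lambda>q. \<Sum>p\<in>{p. f p \<noteq> 0}. f p * G p q)"

lemma lin_ext_superset:
  "finite S \<Longrightarrow> {p. f p \<noteq> 0} \<subseteq> S \<Longrightarrow> lin_ext G f = (\<lambda>q. \<Sum>p\<in>S. f p * G p q)"
  unfolding lin_ext_def by (auto intro!: ext sum.mono_neutral_left)

lemma lin_ext_add:
  assumes "finite {p. f p \<noteq> 0}" "finite {p. g p \<noteq> 0}"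
  shows "lin_ext G (f + g) = lin_ext G f + lin_ext G g"
proof -
  let ?S = "{p. f p \<noteq> 0} \<union> {p. g p \<noteq> 0}"
  have "lin_ext G h = (\<lambda>q. \<Sum>p\<in>?S. h p * G p q)" if "h \<in> {f, g, f + g}" for h
    by (rule lin_ext_superset) (use assms that in auto)
  then show ?thesis by (simp add: fun_eq_iff sum.distrib distrib_right)
qed

lemma lin_ext_neg: "lin_ext G (- f) = - lin_ext G f"
  by (simp add: lin_ext_def fun_eq_iff sum_negf)

lemma lin_ext_diff:
  assumes "finite {p. f p \<noteq> 0}" "finite {p. g p \<noteq> 0}"
  shows "lin_ext G (f - g) = lin_ext G f - lin_ext G g"
  using lin_ext_add[of f "- g" G] assms by (simp add: lin_ext_neg)

lemma lin_ext_ind: "lin_ext G (ind p) = G p"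
  by (simp add: lin_ext_def ind_def fun_eq_iff)

lemma lin_ext_sum_list: "lin_ext G (sum_list (map ind xs)) = sum_list (map G xs)"
proof (induction xs)
  case Nil
  then show ?case by (simp add: lin_ext_def fun_eq_iff)
next
  case (Cons x xs)
  have "lin_ext G (sum_list (map ind (x # xs))) = lin_ext G (ind x + sum_list (map ind xs))"
    by simp
  also have "\<dots> = G x + sum_list (map G xs)"
    by (simp only: lin_ext_add[OF finite_support_ind finite_support_sum_list] lin_ext_ind Cons.IH)
  finally show ?case by (simp only: list.map sum_list.Cons)
qed

lemma lin_ext_trel:
  assumes "\<And>m m' n. G (m + m', n) - G (m, n) - G (m', n) \<in> trel k' ra' la'"
    and "\<And>m n n'. G (m, n + n') - G (m, n) - G (m, n') \<in> trel k' ra' la'"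
    and "\<And>i m n. i < k \<Longrightarrow> G (ra m i, n) - G (m, la i n) \<in> trel k' ra' la'"
    and f: "f \<in> trel k ra la"
  shows "lin_ext G f \<in> trel k' ra' la'"
  using f
proof (induction rule: trel.induct)
  case zero
  show ?case using trel_zero[of k' ra' la'] by (simp add: lin_ext_def zero_fun_def[symmetric])
next
  case (addl m m' n)
  have "lin_ext G (ind (m + m', n) - ind (m, n) - ind (m', n)) = G (m + m', n) - G (m, n) - G (m', n)"
    by (simp only: lin_ext_ind lin_ext_diff[OF finite_support_ind finite_support_ind]
        lin_ext_diff[OF finite_support_diff[OF finite_support_ind finite_support_ind] finite_support_ind])
  moreover have "(\<lambda>p. ind (m + m', n) p - ind (m, n) p - ind (m', n) p) = ind (m + m', n) - ind (m, n) - ind (m', n)"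
    by (simp add: fun_eq_iff)
  ultimately show ?case using assms(1)[of m m' n] by (simp only:)
next
  case (addr m n n')
  have "lin_ext G (ind (m, n + n') - ind (m, n) - ind (m, n')) = G (m, n + n') - G (m, n) - G (m, n')"
    by (simp only: lin_ext_ind lin_ext_diff[OF finite_support_ind finite_support_ind]
        lin_ext_diff[OF finite_support_diff[OF finite_support_ind finite_support_ind] finite_support_ind])
  moreover have "(\<lambda>p. ind (m, n + n') p - ind (m, n) p - ind (m, n') p) = ind (m, n + n') - ind (m, n) - ind (m, n')"
    by (simp add: fun_eq_iff)
  ultimately show ?case using assms(2)[of m n n'] by (simp only:)
next
  case (bal i m n)
  have "lin_ext G (ind (ra m i, n) - ind (m, la i n)) = G (ra m i, n) - G (m, la i n)"
    by (simp only: lin_ext_ind lin_ext_diff[OF finite_support_ind finite_support_ind])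
  moreover have "(\<lambda>p. ind (ra m i, n) p - ind (m, la i n) p) = ind (ra m i, n) - ind (m, la i n)"
    by (simp add: fun_eq_iff)
  ultimately show ?case using assms(3)[OF bal] by (simp only:)
next
  case (plus f g)
  have "(\<lambda>p. f p + g p) = f + g" by (simp add: fun_eq_iff)
  then show ?case
    using lin_ext_add[OF finite_support_trel[OF plus(1)] finite_support_trel[OF plus(2)], of G]
      trel_add[OF plus(3,4)] by (simp only:)
next
  case (neg f)
  have "(\<lambda>p. - f p) = - f" by (simp add: fun_eq_iff)
  then show ?case using trel_neg[OF neg(2)] by (simp only: lin_ext_neg)
qed

definition tequiv :: "nat \<Rightarrow> ('m::ab_group_add \<Rightarrow> nat \<Rightarrow> 'm) \<Rightarrow> (nat \<Rightarrow> 'n::ab_group_add \<Rightarrow> 'n)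
    \<Rightarrow> ('m \<times> 'n \<Rightarrow> int) \<Rightarrow> ('m \<times> 'n \<Rightarrow> int) \<Rightarrow> bool" where
  "tequiv k ra la f g \<longleftrightarrow> f - g \<in> trel k ra la"

lemma teq_iff_tequiv: "teq k ra la xs ys \<longleftrightarrow> tequiv k ra la (fsum xs) (fsum ys)"
  unfolding teq_def tequiv_def by (simp add: fun_diff_def)

lemma tequiv_lin_ext:
  assumes "teq k ra la xs ys"
    and "\<And>m m' n. G (m + m', n) - G (m, n) - G (m', n) \<in> trel k' ra' la'"
    and "\<And>m n n'. G (m, n + n') - G (m, n) - G (m, n') \<in> trel k' ra' la'"
    and "\<And>i m n. i < k \<Longrightarrow> G (ra m i, n) - G (m, la i n) \<in> trel k' ra' la'"
  shows "tequiv k' ra' la' (sum_list (map G xs)) (sum_list (map G ys))"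
proof -
  have "sum_list (map ind xs) - sum_list (map ind ys) \<in> trel k ra la"
    using assms(1) by (simp add: teq_iff_tequiv tequiv_def fsum_conv_sum_list)
  from lin_ext_trel[OF assms(2-4) this] show ?thesis
    by (simp add: tequiv_def lin_ext_diff finite_support_sum_list lin_ext_sum_list)
qed

lemma tequiv_refl [intro]: "tequiv k ra la f f"
  by (simp add: tequiv_def trel_zero)

lemma tequiv_sym: "tequiv k ra la f g \<Longrightarrow> tequiv k ra la g f"
  unfolding tequiv_def using trel_neg by fastforce

lemma tequiv_trans [trans]: "tequiv k ra la f g \<Longrightarrow> tequiv k ra la g h \<Longrightarrow> tequiv k ra la f h"
  unfolding tequiv_def using trel_add by fastforce

lemma tequiv_add:
  "tequiv k ra la f g \<Longrightarrow> tequiv k ra la f' g' \<Longrightarrow> tequiv k ra la (f + f') (g + g')"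
  unfolding tequiv_def using trel_add by (fastforce simp: algebra_simps)

lemma tequiv_neg: "tequiv k ra la f g \<Longrightarrow> tequiv k ra la (- f) (- g)"
  unfolding tequiv_def using trel_neg by fastforce

lemma tequiv_diff:
  "tequiv k ra la f g \<Longrightarrow> tequiv k ra la f' g' \<Longrightarrow> tequiv k ra la (f - f') (g - g')"
  using tequiv_add[OF _ tequiv_neg] by (metis diff_conv_add_uminus)

lemma tequiv_sg: "tequiv k ra la f g \<Longrightarrow> tequiv k ra la (sg e f) (sg e g)"
  by (simp add: sg_def tequiv_neg)

lemma tequiv_sum_list:
  "(\<And>x. x \<in> set xs \<Longrightarrow> tequiv k ra la (F x) (G x)) \<Longrightarrow>
    tequiv k ra la (sum_list (map F xs)) (sum_list (map G xs))"
  by (induction xs) (auto intro: tequiv_add)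

lemma tequiv_by_diff: "f - g = h \<Longrightarrow> h \<in> trel k ra la \<Longrightarrow> tequiv k ra la f g"
  by (simp add: tequiv_def)

lemma ind_add_left: "tequiv k ra la (ind (m + m', n)) (ind (m, n) + ind (m', n))"
  unfolding tequiv_def using trel_addl[of m m' n k ra la] by (simp add: algebra_simps)

lemma ind_add_right: "tequiv k ra la (ind (m, n + n')) (ind (m, n) + ind (m, n'))"
  unfolding tequiv_def using trel_addr[of m n n' k ra la] by (simp add: algebra_simps)

lemma ind_balanced: "i < k \<Longrightarrow> tequiv k ra la (ind (ra m i, n)) (ind (m, la i n))"
  unfolding tequiv_def using trel_bal by blast

lemma ind_zero_left: "tequiv k ra la (ind (0, n)) 0"
proof -
  have "ind (0 + 0, n) - (ind (0, n) + ind (0, n)) \<in> trel k ra la"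
    using ind_add_left[of k ra la 0 0 n] by (simp add: tequiv_def)
  then show ?thesis using trel_neg by (fastforce simp: tequiv_def algebra_simps)
qed

lemma ind_zero_right: "tequiv k ra la (ind (m, 0)) 0"
proof -
  have "ind (m, 0 + 0) - (ind (m, 0) + ind (m, 0)) \<in> trel k ra la"
    using ind_add_right[of k ra la m 0 0] by (simp add: tequiv_def)
  then show ?thesis using trel_neg by (fastforce simp: tequiv_def algebra_simps)
qed

lemma ind_neg_left: "tequiv k ra la (ind (- m, n)) (- ind (m, n))"
proof -
  have "tequiv k ra la 0 (ind (m + - m, n))"
    using tequiv_sym[OF ind_zero_left] by simp
  also have "tequiv k ra la \<dots> (ind (m, n) + ind (- m, n))" by (rule ind_add_left)
  finally have "tequiv k ra la (- ind (m, n) + 0) (- ind (m, n) + (ind (m, n) + ind (- m, n)))"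
    by (rule tequiv_add[OF tequiv_refl])
  then show ?thesis by (simp add: tequiv_sym)
qed

lemma ind_neg_right: "tequiv k ra la (ind (m, - n)) (- ind (m, n))"
proof -
  have "tequiv k ra la 0 (ind (m, n + - n))"
    using tequiv_sym[OF ind_zero_right] by simp
  also have "tequiv k ra la \<dots> (ind (m, n) + ind (m, - n))" by (rule ind_add_right)
  finally have "tequiv k ra la (- ind (m, n) + 0) (- ind (m, n) + (ind (m, n) + ind (m, - n)))"
    by (rule tequiv_add[OF tequiv_refl])
  then show ?thesis by (simp add: tequiv_sym)
qed

lemma ind_diff_right: "tequiv k ra la (ind (m, n - n')) (ind (m, n) - ind (m, n'))"
proof -
  have "tequiv k ra la (ind (m, n + - n')) (ind (m, n) + ind (m, - n'))" by (rule ind_add_right)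
  also have "tequiv k ra la \<dots> (ind (m, n) + - ind (m, n'))"
    by (rule tequiv_add[OF tequiv_refl ind_neg_right])
  finally show ?thesis by simp
qed

lemma ind_sg_left: "tequiv k ra la (ind (sg e m, n)) (sg e (ind (m, n)))"
  unfolding sg_def using ind_neg_left[of k ra la m n] by auto

lemma ind_sg_right: "tequiv k ra la (ind (m, sg e n)) (sg e (ind (m, n)))"
  unfolding sg_def using ind_neg_right[of k ra la m n] by auto

lemma fsum_tneg: "tequiv k ra la (fsum (tneg xs)) (- fsum xs)"
proof (induction xs)
  case Nil
  show ?case by (simp add: tneg_def tequiv_refl)
next
  case (Cons p xs)
  obtain m n where p: "p = (m, n)" by (cases p)
  have "fsum (tneg (p # xs)) = ind (- m, n) + fsum (tneg xs)"
    by (simp add: tneg_def fsum_Cons p)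
  moreover have "- fsum (p # xs) = - ind (m, n) + - fsum xs"
    by (simp add: fsum_Cons p)
  ultimately show ?case using tequiv_add[OF ind_neg_left Cons.IH] by (simp only:)
qed

section \<open>Signs\<close>

lemma sg_parity_cong: "even (e - e') \<Longrightarrow> sg e x = sg e' x"
  by (auto simp: sg_def)

lemma sg_add: "sg e (x + y) = sg e x + sg e y"
  by (simp add: sg_def)

lemma sg_diff: "sg e (x - y) = sg e x - sg e y"
  by (simp add: sg_def)

lemma sg_sg: "sg e (sg e' x) = sg (e + e') x"
  by (simp add: sg_def)

lemma sg_zero [simp]: "sg e 0 = 0"
  by (simp add: sg_def)

lemma sg_plus_one: "sg (e + 1) x = - sg e x"
  by (simp add: sg_def)

lemma (in additive) sg: "f (sg e x) = sg e (f x)"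
  by (simp add: sg_def minus)

text \<open>A generator with a vanishing entry is zero in the tensor product, so signs only have to
  be compared when both entries are nonzero, which is where homological degrees are defined.\<close>

lemma ind_sg_parity:
  assumes "m \<noteq> 0 \<Longrightarrow> n \<noteq> 0 \<Longrightarrow> even (e0 + e1 + e2 - e')"
  shows "tequiv k ra la (sg e0 (ind (sg e1 m, sg e2 n))) (sg e' (ind (m, n)))"
proof (cases "m = 0 \<or> n = 0")
  case True
  then have "tequiv k ra la (ind (m', n')) 0"
    if "m' = m \<or> m' = - m" "n' = n \<or> n' = - n" for m' n'
    using that ind_zero_left ind_zero_right by (metis neg_equal_0_iff_equal)
  then have "tequiv k ra la (ind (sg e1 m, sg e2 n)) 0" "tequiv k ra la (ind (m, n)) 0"
    by (simp_all add: sg_def)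
  then have "tequiv k ra la (sg e0 (ind (sg e1 m, sg e2 n))) 0" "tequiv k ra la (sg e' (ind (m, n))) 0"
    using tequiv_sg[where g = 0] by fastforce+
  then show ?thesis using tequiv_trans tequiv_sym by blast
next
  case False
  have "tequiv k ra la (sg e0 (ind (sg e1 m, sg e2 n))) (sg e0 (sg e1 (ind (m, sg e2 n))))"
    by (rule tequiv_sg[OF ind_sg_left])
  also have "tequiv k ra la \<dots> (sg e0 (sg e1 (sg e2 (ind (m, n)))))"
    by (rule tequiv_sg[OF tequiv_sg[OF ind_sg_right]])
  also have "\<dots> = sg e' (ind (m, n))"
    unfolding sg_sg using False assms by (intro sg_parity_cong) auto
  finally show ?thesis .
qed

lemma ind_sg_left_parity:
  "(m \<noteq> 0 \<Longrightarrow> n \<noteq> 0 \<Longrightarrow> even (e - e')) \<Longrightarrow>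
    tequiv k ra la (ind (sg e m, n)) (sg e' (ind (m, n)))"
  using ind_sg_parity[of m n 0 e 0 e'] by (simp add: sg_def)

lemma ind_sg_both_parity:
  "(m \<noteq> 0 \<Longrightarrow> n \<noteq> 0 \<Longrightarrow> even (e1 + e2 - e')) \<Longrightarrow>
    tequiv k ra la (ind (sg e1 m, sg e2 n)) (sg e' (ind (m, n)))"
  using ind_sg_parity[of m n 0 e1 e2 e'] by (simp add: sg_def)

lemma sg_ind_sg_left_parity:
  "(m \<noteq> 0 \<Longrightarrow> n \<noteq> 0 \<Longrightarrow> even (e0 + e - e')) \<Longrightarrow>
    tequiv k ra la (sg e0 (ind (sg e m, n))) (sg e' (ind (m, n)))"
  using ind_sg_parity[of m n e0 e 0 e'] by (simp add: sg_def)

text \<open>The bookkeeping behind the structure equation: once the linear terms are rewritten by the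
  second \<open>A\<^sub>\<infinity>\<close>-relation and the quadratic ones by the third, what remains is the image of the
  structure equation of \<open>\<delta>\<^sub>D\<^sub>D\<close>.\<close>

lemma tequiv_expansion_cancel:
  fixes Xa Xb Xc Xd Aa Ab :: "'p \<Rightarrow> ('m::ab_group_add \<times> 'n::ab_group_add \<Rightarrow> int)"
    and Qa Qb Qc :: "'p \<Rightarrow> 'p \<Rightarrow> ('m \<times> 'n \<Rightarrow> int)" and h :: "'p \<Rightarrow> int" and n :: int
  assumes rel2: "\<And>s. s \<in> set ds \<Longrightarrow> tequiv k ra la (Xc s + Xb s) (Xa s - sg (1 - h s) (Xd s) - Aa s)"
    and rel3: "\<And>s t. t \<in> set ds \<Longrightarrow> tequiv k ra la (Qa s t) (Qc s t - sg (1 - h t) (Qb s t))"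
    and dd: "tequiv k ra la (sum_list (map (\<lambda>s. sg (n * h s) (Aa s)) ds)
      + sum_list (map (\<lambda>s. sg (n * h s + n + h s + 1) (Ab s)) ds)
      + sum_list (map (\<lambda>s. sum_list (map (\<lambda>t. sg ((n + 1 - h s) * (h s + h t)) (Qc s t)) ds)) ds)) 0"
  shows "tequiv k ra la (sum_list (map (\<lambda>s. sg (n * h s + n + h s) (Ab s)) ds))
    ((Y + sum_list (map (\<lambda>t. sg ((n + 1) * h t) (Xd t)) ds))
      + sum_list (map (\<lambda>s. sg (n * h s) (Xa s) + sum_list (map (\<lambda>t. sg ((n + 1 - h s) * (h s + h t)) (Qa s t)) ds)) ds)
      + - ((Y + sum_list (map (\<lambda>t. sg (n * h t) (Xb t)) ds))
      + sum_list (map (\<lambda>s. sg (n * h s) (Xc s) + sum_list (map (\<lambda>t. sg (n * h s + (n - h s) * h t) (Qb s t)) ds)) ds)))"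
    (is "tequiv _ _ _ _ ?rhs")
proof -
  define W where "W s = sg ((n + 1) * h s) (Xd s) + sg (n * h s) (Xa s) - sg (n * h s) (Xb s) - sg (n * h s) (Xc s)
    + sum_list (map (\<lambda>t. sg ((n + 1 - h s) * (h s + h t)) (Qa s t) - sg (n * h s + (n - h s) * h t) (Qb s t)) ds)" for s
  have expand: "?rhs = sum_list (map W ds)"
    unfolding W_def by (simp add: sum_list_addf sum_list_subtractf algebra_simps)
  define V where "V s = sg (n * h s) (Aa s) + sum_list (map (\<lambda>t. sg ((n + 1 - h s) * (h s + h t)) (Qc s t)) ds)" for s
  have "tequiv k ra la (W s) (V s)" if s: "s \<in> set ds" for s
  proof (rule tequiv_by_diff)
    have sg1: "sg (n * h s) (sg (1 - h s) f) = - sg ((n + 1) * h s) f" for f :: "'m \<times> 'n \<Rightarrow> int"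
    proof -
      have "sg (n * h s) (sg (1 - h s) f) = sg ((n + 1) * h s + 1) f"
        unfolding sg_sg by (rule sg_parity_cong) (simp add: algebra_simps)
      then show ?thesis by (simp only: sg_plus_one)
    qed
    have sg2: "sg ((n + 1 - h s) * (h s + h t)) (sg (1 - h t) f) = - sg (n * h s + (n - h s) * h t) f"
      for t and f :: "'m \<times> 'n \<Rightarrow> int"
    proof -
      have "sg ((n + 1 - h s) * (h s + h t)) (sg (1 - h t) f) = sg (n * h s + (n - h s) * h t + 1) f"
        unfolding sg_sg by (rule sg_parity_cong) (simp add: algebra_simps)
      then show ?thesis by (simp only: sg_plus_one)
    qed
    show "W s - V s = sg (n * h s) (Xa s - sg (1 - h s) (Xd s) - Aa s - (Xc s + Xb s))
      + sum_list (map (\<lambda>t. sg ((n + 1 - h s) * (h s + h t)) (Qa s t - (Qc s t - sg (1 - h t) (Qb s t)))) ds)"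
      unfolding W_def V_def
      by (simp only: sg_diff sg_add sg1 sg2) (simp add: sum_list_addf sum_list_subtractf algebra_simps)
    show "\<dots> \<in> trel k ra la"
    proof (rule trel_add[OF trel_sg trel_sum_list])
      show "Xa s - sg (1 - h s) (Xd s) - Aa s - (Xc s + Xb s) \<in> trel k ra la"
        using trel_neg[OF rel2[OF s, unfolded tequiv_def]] by (simp add: algebra_simps)
      show "sg ((n + 1 - h s) * (h s + h t)) (Qa s t - (Qc s t - sg (1 - h t) (Qb s t))) \<in> trel k ra la"
        if "t \<in> set ds" for t
        using rel3[OF that] by (simp add: tequiv_def trel_sg)
    qed
  qed
  then have "tequiv k ra la (sum_list (map W ds)) (sum_list (map V ds))"
    by (rule tequiv_sum_list)
  also have "tequiv k ra la \<dots> (sum_list (map (\<lambda>s. sg (n * h s + n + h s) (Ab s)) ds))"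
  proof (rule tequiv_by_diff)
    show "sum_list (map V ds) - sum_list (map (\<lambda>s. sg (n * h s + n + h s) (Ab s)) ds)
      = sum_list (map (\<lambda>s. sg (n * h s) (Aa s)) ds)
      + sum_list (map (\<lambda>s. sg (n * h s + n + h s + 1) (Ab s)) ds)
      + sum_list (map (\<lambda>s. sum_list (map (\<lambda>t. sg ((n + 1 - h s) * (h s + h t)) (Qc s t)) ds)) ds)"
      unfolding V_def by (simp only: sg_plus_one sum_list_negf) (simp add: sum_list_addf algebra_simps)
    show "\<dots> \<in> trel k ra la" using dd by (simp add: tequiv_def)
  qed
  finally show ?thesis
    unfolding expand by (rule tequiv_sym)
qed
section \<open>The grading involution of a bigraded group\<close>

lemma bigraded_zero: "bigraded_group X \<Longrightarrow> X 0 q h"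
  by (simp add: bigraded_group_def)

lemma bigraded_add: "bigraded_group X \<Longrightarrow> X x q h \<Longrightarrow> X y q h \<Longrightarrow> X (x + y) q h"
  by (simp add: bigraded_group_def)

lemma bigraded_neg: "bigraded_group X \<Longrightarrow> X x q h \<Longrightarrow> X (- x) q h"
  by (simp add: bigraded_group_def)

lemma bigraded_diff: "bigraded_group X \<Longrightarrow> X x q h \<Longrightarrow> X y q h \<Longrightarrow> X (x - y) q h"
  by (metis bigraded_add bigraded_neg diff_conv_add_uminus)

lemma bigraded_sg: "bigraded_group X \<Longrightarrow> X x q h \<Longrightarrow> X (sg e x) q h"
  by (simp add: sg_def bigraded_neg)

lemma bigraded_independent:
  "bigraded_group X \<Longrightarrow> finite D \<Longrightarrow> \<forall>d\<in>D. X (f d) (fst d) (snd d) \<Longrightarrow> sum f D = 0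
    \<Longrightarrow> d \<in> D \<Longrightarrow> f d = 0"
  unfolding bigraded_group_def by blast

lemma hd_eq:
  assumes X: "bigraded_group X" and z: "X z q h" "z \<noteq> 0"
  shows "hd X z = h"
  unfolding hd_def
proof (rule the_equality)
  show "\<exists>q. X z q h" using z by blast
next
  fix h' assume "\<exists>q'. X z q' h'"
  then obtain q' where z': "X z q' h'" by blast
  show "h' = h"
  proof (rule ccontr)
    assume "h' \<noteq> h"
    then have "(q, h) \<noteq> (q', h')" by simp
    let ?f = "\<lambda>d. if d = (q, h) then z else - z"
    have "\<forall>d\<in>{(q, h), (q', h')}. X (?f d) (fst d) (snd d)"
      using \<open>(q, h) \<noteq> (q', h')\<close> z bigraded_neg[OF X z'] by auto
    moreover have "sum ?f {(q, h), (q', h')} = 0"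
      using \<open>(q, h) \<noteq> (q', h')\<close> by auto
    ultimately have "?f (q, h) = 0"
      by (intro bigraded_independent[OF X, of "{(q, h), (q', h')}" ?f]) simp_all
    with z show False by simp
  qed
qed

definition hom_decomp ::
    "('a::ab_group_add \<Rightarrow> int \<Rightarrow> int \<Rightarrow> bool) \<Rightarrow> 'a \<Rightarrow> (int \<times> int) set \<Rightarrow> (int \<times> int \<Rightarrow> 'a) \<Rightarrow> bool" where
  "hom_decomp X z D f \<longleftrightarrow> finite D \<and> (\<forall>d\<in>D. X (f d) (fst d) (snd d)) \<and> z = sum f D"

text \<open>The additive map acting by \<open>(-1)^h\<close> on the component of homological degree \<open>h\<close>.
  It makes the sign \<open>(-1)^(n deg_h c)\<close> additive in \<open>c\<close>, so that tensor relations can be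
  transported through it.\<close>

definition grade_sign :: "('a::ab_group_add \<Rightarrow> int \<Rightarrow> int \<Rightarrow> bool) \<Rightarrow> 'a \<Rightarrow> 'a" where
  "grade_sign X z = (SOME w. \<exists>D f. hom_decomp X z D f \<and> w = (\<Sum>d\<in>D. sg (snd d) (f d)))"

lemma hom_decomp_exists: "bigraded_group X \<Longrightarrow> \<exists>D f. hom_decomp X z D f"
  unfolding bigraded_group_def hom_decomp_def by blast

lemma sum_extend_zero:
  assumes "finite U" "D \<subseteq> U" "\<And>d. g d 0 = 0"
  shows "(\<Sum>d\<in>U. g d (if d \<in> D then f d else 0)) = (\<Sum>d\<in>D. g d (f d))"
  by (rule sum.mono_neutral_cong_right) (use assms in auto)

lemma hom_decomp_common_support:
  assumes "hom_decomp X z D f" "finite U" "D \<subseteq> U" "bigraded_group X"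
  shows "hom_decomp X z U (\<lambda>d. if d \<in> D then f d else 0)"
    and "(\<Sum>d\<in>U. sg (snd d) (if d \<in> D then f d else 0)) = (\<Sum>d\<in>D. sg (snd d) (f d))"
  using assms sum_extend_zero[OF assms(2,3), of "\<lambda>_ x. x" f]
    sum_extend_zero[OF assms(2,3), of "\<lambda>d. sg (snd d)" f]
  by (auto simp: hom_decomp_def bigraded_zero)

lemma hom_decomp_unique:
  assumes X: "bigraded_group X" and "hom_decomp X z U f" "hom_decomp X z U f'" "d \<in> U"
  shows "f d = f' d"
proof -
  have "\<forall>d\<in>U. X (f d - f' d) (fst d) (snd d)" "sum (\<lambda>d. f d - f' d) U = 0"
    using assms by (auto simp: hom_decomp_def sum_subtractf intro: bigraded_diff[OF X])
  then show ?thesis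
    using bigraded_independent[OF X, of U "\<lambda>d. f d - f' d"] assms by (auto simp: hom_decomp_def)
qed

lemma grade_sign_decomp:
  assumes X: "bigraded_group X" and d: "hom_decomp X z D f"
  shows "grade_sign X z = (\<Sum>d\<in>D. sg (snd d) (f d))"
proof -
  have "\<exists>w. \<exists>D f. hom_decomp X z D f \<and> w = (\<Sum>d\<in>D. sg (snd d) (f d))" using d by blast
  from someI_ex[OF this] obtain D' f' where d': "hom_decomp X z D' f'"
    and g: "grade_sign X z = (\<Sum>d\<in>D'. sg (snd d) (f' d))"
    unfolding grade_sign_def by blast
  let ?U = "D \<union> D'"
  have fin: "finite ?U" using d d' by (simp add: hom_decomp_def)
  note e = hom_decomp_common_support[OF d fin _ X] hom_decomp_common_support[OF d' fin _ X]
  have "(\<Sum>d\<in>D. sg (snd d) (f d)) = (\<Sum>d\<in>?U. sg (snd d) (if d \<in> D then f d else 0))"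
    using e(2) by simp
  also have "\<dots> = (\<Sum>d\<in>?U. sg (snd d) (if d \<in> D' then f' d else 0))"
    using hom_decomp_unique[OF X e(1) e(3)] by (intro sum.cong) auto
  also have "\<dots> = (\<Sum>d\<in>D'. sg (snd d) (f' d))"
    using e(4) by simp
  finally show ?thesis using g by simp
qed

lemma grade_sign_hom:
  assumes "bigraded_group X" "X z q h"
  shows "grade_sign X z = sg h z"
  using grade_sign_decomp[OF assms(1), of z "{(q, h)}" "\<lambda>_. z"] assms
  by (simp add: hom_decomp_def)

lemma grade_sign_add:
  assumes X: "bigraded_group X"
  shows "grade_sign X (z + w) = grade_sign X z + grade_sign X w"
proof -
  obtain D f D' f' where d: "hom_decomp X z D f" and d': "hom_decomp X w D' f'"
    using hom_decomp_exists[OF X] by metis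
  let ?U = "D \<union> D'"
  have fin: "finite ?U" using d d' by (simp add: hom_decomp_def)
  note e = hom_decomp_common_support[OF d fin _ X] hom_decomp_common_support[OF d' fin _ X]
  define F where "F = (\<lambda>d. if d \<in> D then f d else 0)"
  define F' where "F' = (\<lambda>d. if d \<in> D' then f' d else 0)"
  have "hom_decomp X z ?U F" "hom_decomp X w ?U F'"
    using e(1,3) by (simp_all add: F_def F'_def)
  then have "hom_decomp X (z + w) ?U (\<lambda>d. F d + F' d)"
    by (auto simp: hom_decomp_def sum.distrib intro: bigraded_add[OF X])
  then show ?thesis
    using grade_sign_decomp[OF X] e(2,4) \<open>hom_decomp X z ?U F\<close> \<open>hom_decomp X w ?U F'\<close>
    by (simp add: sg_add sum.distrib F_def F'_def)
qed

lemma grade_sign_natural: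
  assumes X: "bigraded_group X" and Y: "bigraded_group Y" and \<phi>: "additive \<phi>"
    and deg: "\<And>x q h. X x q h \<Longrightarrow> Y (\<phi> x) q h"
  shows "grade_sign Y (\<phi> z) = \<phi> (grade_sign X z)"
proof -
  obtain D f where d: "hom_decomp X z D f" using hom_decomp_exists[OF X] by blast
  then have "hom_decomp Y (\<phi> z) D (\<lambda>d. \<phi> (f d))"
    using deg by (auto simp: hom_decomp_def additive.sum[OF \<phi>])
  then show ?thesis
    using grade_sign_decomp[OF X d] grade_sign_decomp[OF Y]
    by (simp add: additive.sum[OF \<phi>] additive.sg[OF \<phi>])
qed

definition grade_sign_pow :: "('a::ab_group_add \<Rightarrow> int \<Rightarrow> int \<Rightarrow> bool) \<Rightarrow> int \<Rightarrow> 'a \<Rightarrow> 'a" where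
  "grade_sign_pow X n z = (if even n then z else grade_sign X z)"

lemma grade_sign_pow_hom:
  assumes "bigraded_group X" "X z q h"
  shows "grade_sign_pow X n z = sg (n * h) z"
  using grade_sign_hom[OF assms] by (auto simp: grade_sign_pow_def sg_def)

lemma grade_sign_pow_add:
  "bigraded_group X \<Longrightarrow> grade_sign_pow X n (z + w) = grade_sign_pow X n z + grade_sign_pow X n w"
  by (simp add: grade_sign_pow_def grade_sign_add)

lemma grade_sign_pow_natural:
  "bigraded_group X \<Longrightarrow> additive \<phi> \<Longrightarrow> (\<And>x q h. X x q h \<Longrightarrow> X (\<phi> x) q h) \<Longrightarrow>
    grade_sign_pow X n (\<phi> z) = \<phi> (grade_sign_pow X n z)"
  by (simp add: grade_sign_pow_def grade_sign_natural)

section \<open>Differential bigraded algebras and modules\<close>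

text \<open>The following locales keep only those axioms of \<open>dg_algebra\<close>, \<open>dg_module\<close>,
  \<open>ainf_morphism\<close> and \<open>rank_one_DD\<close> that the argument uses.\<close>

locale dg_alg =
  fixes k :: nat and C :: "'b::ab_group_add dgba"
  assumes bigraded: "bigraded_group (bdeg C)"
    and mul_add_left: "bmul C (x + y) z = bmul C x z + bmul C y z"
    and mul_add_right: "bmul C x (y + z) = bmul C x y + bmul C x z"
    and mul_one [simp]: "bmul C (bone C) x = x" "bmul C x (bone C) = x"
    and mul_deg: "bdeg C x q h \<Longrightarrow> bdeg C y q' h' \<Longrightarrow> bdeg C (bmul C x y) (q + q') (h + h')"
    and idm_deg: "i < k \<Longrightarrow> bdeg C (bidm C i) 0 0"
    and one_sum_idm: "bone C = (\<Sum>i<k. bidm C i)"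
    and deg_zero_iff: "bdeg C x 0 0 \<longleftrightarrow> (\<exists>n. x = (\<Sum>i<k. zsc (n i) (bidm C i)))"
    and dif_add: "bdif C (x + y) = bdif C x + bdif C y"
    and dif_deg: "bdeg C x q h \<Longrightarrow> bdeg C (bdif C x) q (h + 1)"
    and leibniz: "bdeg C y q h \<Longrightarrow> bdif C (bmul C x y) = sg h (bmul C (bdif C x) y) + bmul C x (bdif C y)"
begin

lemma additive_mul_left: "additive (\<lambda>x. bmul C x y)"
  by (simp add: additive_def mul_add_left)

lemma additive_mul_right: "additive (bmul C x)"
  by (simp add: additive_def mul_add_right)

lemma additive_dif: "additive (bdif C)"
  by (simp add: additive_def dif_add)

lemma mul_zero_left [simp]: "bmul C 0 x = 0"
  by (rule additive.zero[OF additive_mul_left])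

lemma mul_zero_right [simp]: "bmul C x 0 = 0"
  by (rule additive.zero[OF additive_mul_right])

lemma dif_zero [simp]: "bdif C 0 = 0"
  by (rule additive.zero[OF additive_dif])

lemma mul_sg_left: "bmul C (sg e x) y = sg e (bmul C x y)"
  by (rule additive.sg[OF additive_mul_left])

lemma mul_sg_right: "bmul C x (sg e y) = sg e (bmul C x y)"
  by (rule additive.sg[OF additive_mul_right])

lemma dif_sg: "bdif C (sg e x) = sg e (bdif C x)"
  by (rule additive.sg[OF additive_dif])

lemma one_deg: "bdeg C (bone C) 0 0"
proof -
  have "bone C = (\<Sum>i<k. zsc 1 (bidm C i))"
    by (simp add: one_sum_idm zsc_def)
  then show ?thesis
    by (intro deg_zero_iff[THEN iffD2] exI[of _ "\<lambda>_. 1"])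
qed

lemma dif_one: "bdif C (bone C) = 0"
  using leibniz[OF one_deg, of "bone C"] by (simp add: sg_def)

end

lemma dg_alg_if_dg_algebra: "dg_algebra k C \<Longrightarrow> dg_alg k C"
  unfolding dg_algebra_def dg_alg_def by (elim conjE) (intro conjI allI impI; simp)

locale dg_mod =
  fixes C :: "'b::ab_group_add dgba" and N :: "('a::ab_group_add, 'b) dgmod"
  assumes bigraded: "bigraded_group (mdeg N)"
    and act_add_left: "mact N (x + y) b = mact N x b + mact N y b"
    and act_add_right: "mact N x (b + c) = mact N x b + mact N x c"
    and act_deg: "mdeg N x q h \<Longrightarrow> bdeg C b q' h' \<Longrightarrow> mdeg N (mact N x b) (q + q') (h + h')"
    and dif_add: "mdif N (x + y) = mdif N x + mdif N y"
    and dif_deg: "mdeg N x q h \<Longrightarrow> mdeg N (mdif N x) q (h + 1)"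
begin

lemma additive_act_left: "additive (\<lambda>x. mact N x b)"
  by (simp add: additive_def act_add_left)

lemma additive_act_right: "additive (mact N x)"
  by (simp add: additive_def act_add_right)

lemma additive_dif: "additive (mdif N)"
  by (simp add: additive_def dif_add)

lemma act_zero_left [simp]: "mact N 0 b = 0"
  by (rule additive.zero[OF additive_act_left])

lemma dif_zero [simp]: "mdif N 0 = 0"
  by (rule additive.zero[OF additive_dif])

lemma act_sg_right: "mact N x (sg e b) = sg e (mact N x b)"
  by (rule additive.sg[OF additive_act_right])

lemma hd_eq: "mdeg N z q h \<Longrightarrow> z \<noteq> 0 \<Longrightarrow> hd (mdeg N) z = h"
  by (rule hd_eq[OF bigraded])

end

lemma dg_mod_if_dg_module: "dg_module k C N \<Longrightarrow> dg_mod C N"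
  unfolding dg_module_def dg_mod_def by (elim conjE) (intro conjI allI impI; simp)

locale ainf_mor =
  fixes k :: nat and B :: "'b::ab_group_add dgba"
    and M :: "('a::ab_group_add, 'b) dgmod" and M' :: "('d::ab_group_add, 'b) dgmod"
    and F1 :: "'a \<Rightarrow> 'd" and F2 :: "'a \<Rightarrow> 'b \<Rightarrow> 'd"
  assumes F1_add: "F1 (x + y) = F1 x + F1 y"
    and F1_deg: "mdeg M x q h \<Longrightarrow> mdeg M' (F1 x) q h"
    and F1_idm: "i < k \<Longrightarrow> F1 (mact M x (bidm B i)) = mact M' (F1 x) (bidm B i)"
    and F2_add_left: "F2 (x + y) b = F2 x b + F2 y b"
    and F2_add_right: "F2 x (b + c) = F2 x b + F2 x c"
    and F2_idm_left: "i < k \<Longrightarrow> F2 (mact M x (bidm B i)) b = F2 x (bmul B (bidm B i) b)"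
    and F2_idm_right: "i < k \<Longrightarrow> F2 x (bmul B b (bidm B i)) = mact M' (F2 x b) (bidm B i)"
    and F2_deg: "mdeg M x q h \<Longrightarrow> bdeg B b q' h' \<Longrightarrow> mdeg M' (F2 x b) (q + q') (h + h' - 1)"
    and F1_chain: "mdif M' (F1 x) = F1 (mdif M x)"
    and ainf_rel2: "bdeg B b q h \<Longrightarrow>
      mdif M' (F2 x b) + mact M' (F1 x) b = F1 (mact M x b) - F2 (mdif M x) (sg h b) - F2 x (bdif B b)"
    and ainf_rel3: "bdeg B b' q h \<Longrightarrow>
      - mact M' (F2 x b) (sg h b') = F2 (mact M x b) b' - F2 x (bmul B b b')"
begin

lemma additive_F2_right: "additive (F2 x)"
  by (simp add: additive_def F2_add_right)

lemma F2_sg_right: "F2 x (sg e b) = sg e (F2 x b)"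
  by (rule additive.sg[OF additive_F2_right])

lemma F1_zero [simp]: "F1 0 = 0"
  using F1_add[of 0 0] by simp

lemma F2_zero_left [simp]: "F2 0 b = 0"
  using F2_add_left[of 0 0 b] by simp

lemma F2_zero_right [simp]: "F2 x 0 = 0"
  by (rule additive.zero[OF additive_F2_right])

end

lemma ainf_mor_if_ainf_morphism: "ainf_morphism k B M M' F1 F2 \<Longrightarrow> ainf_mor k B M M' F1 F2"
  unfolding ainf_morphism_def ainf_mor_def by (elim conjE) (intro conjI allI impI; simp)

locale rank_one_dd =
  fixes k :: nat and B :: "'b::ab_group_add dgba" and B' :: "'c::ab_group_add dgba"
    and ds :: "('b \<times> 'c) list"
  assumes dd_deg: "(a, c) \<in> set ds \<Longrightarrow>
      \<exists>qa ha qc hc. bdeg B a qa ha \<and> bdeg B' c qc hc \<and> qa + qc = 0 \<and> ha + hc = 1"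
    and dd_idm: "i < k \<Longrightarrow> teq k (\<lambda>a i. bmul B a (bidm B i)) (\<lambda>i c. bmul B' c (bidm B' i))
      (map (\<lambda>(a, c). (bmul B (bidm B i) a, c)) ds) (map (\<lambda>(a, c). (a, bmul B' (bidm B' i) c)) ds)"
    and dd_structure: "teq k (\<lambda>a i. bmul B a (bidm B i)) (\<lambda>i c. bmul B' c (bidm B' i))
      (map (\<lambda>(a, c). (sg (hd (bdeg B') c) (bdif B a), c)) ds @
       map (\<lambda>(a, c). (a, bdif B' c)) ds @
       concat (map (\<lambda>(a, c). map (\<lambda>(a', c').
         (sg (hd (bdeg B) a' * hd (bdeg B') c) (bmul B a a'), bmul B' c c')) ds) ds))
      []"

lemma rank_one_dd_if_rank_one_DD: "rank_one_DD k B B' ds \<Longrightarrow> rank_one_dd k B B' ds"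
  unfolding rank_one_DD_def rank_one_dd_def Let_def by auto

section \<open>The box tensor product of an \<open>A\<^sub>\<infinity>\<close>-morphism with the identity\<close>

locale box_setting =
  B: dg_alg k B + B': dg_alg k B' + M: dg_mod B M + M': dg_mod B M' +
  ainf_mor k B M M' F1 F2 + rank_one_dd k B B' ds
  for k :: nat and B :: "'b::ab_group_add dgba" and B' :: "'c::ab_group_add dgba"
    and M :: "('a::ab_group_add, 'b) dgmod" and M' :: "('d::ab_group_add, 'b) dgmod"
    and F1 :: "'a \<Rightarrow> 'd" and F2 :: "'a \<Rightarrow> 'b \<Rightarrow> 'd" and ds :: "('b \<times> 'c) list"
begin

abbreviation box_equiv :: "('c \<times> 'd \<Rightarrow> int) \<Rightarrow> ('c \<times> 'd \<Rightarrow> int) \<Rightarrow> bool" (infix "\<approx>" 50) where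
  "f \<approx> g \<equiv> tequiv k (\<lambda>c i. bmul B' c (bidm B' i)) (\<lambda>i y. mact M' y (bidm B i)) f g"

definition bscale :: "'c \<Rightarrow> ('c \<times> 'e) list \<Rightarrow> ('c \<times> 'e) list" where
  "bscale b0 xs = map (\<lambda>(b, z). (bmul B' b0 b, z)) xs"

text \<open>Each term \<open>a\<^sub>s \<otimes> c\<^sub>s\<close> of \<open>\<delta>\<^sub>D\<^sub>D(1)\<close> is homogeneous, with \<open>c\<^sub>s\<close> of bidegree
  \<open>(qc s, hc s)\<close> and \<open>a\<^sub>s\<close> of bidegree \<open>(- qc s, 1 - hc s)\<close>; these are chosen even when an entry is
  zero and its degree is not determined by \<open>hd\<close>.\<close>

definition dd_degree :: "'b \<times> 'c \<Rightarrow> int \<times> int" where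
  "dd_degree p = (SOME (q, h). bdeg B (fst p) (- q) (1 - h) \<and> bdeg B' (snd p) q h)"

definition qc :: "'b \<times> 'c \<Rightarrow> int" where "qc p = fst (dd_degree p)"
definition hc :: "'b \<times> 'c \<Rightarrow> int" where "hc p = snd (dd_degree p)"

lemma dd_degree:
  assumes "p \<in> set ds"
  shows "bdeg B (fst p) (- qc p) (1 - hc p) \<and> bdeg B' (snd p) (qc p) (hc p)"
proof -
  obtain qa ha q h where "bdeg B (fst p) qa ha" "bdeg B' (snd p) q h" "qa + q = 0" "ha + h = 1"
    using dd_deg[of "fst p" "snd p"] assms by auto
  moreover from this have "qa = - q" "ha = 1 - h" by simp_all
  ultimately have "\<exists>d. (\<lambda>(q, h). bdeg B (fst p) (- q) (1 - h) \<and> bdeg B' (snd p) q h) d"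
    by (intro exI[of _ "(q, h)"]) simp
  from someI_ex[OF this] show ?thesis
    unfolding dd_degree_def[symmetric] qc_def hc_def by (simp add: case_prod_beta)
qed

lemma deg_a: "p \<in> set ds \<Longrightarrow> bdeg B (fst p) (- qc p) (1 - hc p)"
  using dd_degree by blast

lemma deg_c: "p \<in> set ds \<Longrightarrow> bdeg B' (snd p) (qc p) (hc p)"
  using dd_degree by blast

lemma hd_a: "p \<in> set ds \<Longrightarrow> fst p \<noteq> 0 \<Longrightarrow> hd (bdeg B) (fst p) = 1 - hc p"
  using hd_eq[OF B.bigraded deg_a] by blast

lemma hd_c: "p \<in> set ds \<Longrightarrow> snd p \<noteq> 0 \<Longrightarrow> hd (bdeg B') (snd p) = hc p"
  using hd_eq[OF B'.bigraded deg_c] by blast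

lemma fsum_bscale_Fbox:
  assumes y: "mdeg M y q m"
  shows "fsum (bscale b0 (Fbox B' M' ds F1 F2 y)) \<approx>
    ind (b0, F1 y) + sum_list (map (\<lambda>p. sg (m * hc p) (ind (bmul B' b0 (snd p), F2 y (fst p)))) ds)"
proof -
  have e: "fsum (bscale b0 (Fbox B' M' ds F1 F2 y)) = ind (b0, F1 y) + sum_list (map (\<lambda>p.
      ind (bmul B' b0 (sg (hd (bdeg B') (snd p) * (1 + hd (mdeg M') (F2 y (fst p)))) (snd p)), F2 y (fst p))) ds)"
    by (simp add: bscale_def Fbox_def fsum_Cons fsum_map split_beta o_def)
  show ?thesis
    unfolding e
  proof (intro tequiv_add[OF tequiv_refl] tequiv_sum_list)
    fix p assume p: "p \<in> set ds"
    show "ind (bmul B' b0 (sg (hd (bdeg B') (snd p) * (1 + hd (mdeg M') (F2 y (fst p)))) (snd p)), F2 y (fst p))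
        \<approx> sg (m * hc p) (ind (bmul B' b0 (snd p), F2 y (fst p)))"
      unfolding B'.mul_sg_right
    proof (rule ind_sg_left_parity)
      assume "bmul B' b0 (snd p) \<noteq> 0" and F2: "F2 y (fst p) \<noteq> 0"
      then have "hd (bdeg B') (snd p) = hc p" using hd_c[OF p] by fastforce
      moreover have "hd (mdeg M') (F2 y (fst p)) = m - hc p"
        using M'.hd_eq[OF F2_deg[OF y deg_a[OF p]] F2] by simp
      ultimately show "even (hd (bdeg B') (snd p) * (1 + hd (mdeg M') (F2 y (fst p))) - m * hc p)"
        by auto
    qed
  qed
qed

lemma bscale_one: "bscale (bone B') xs = xs"
  by (induction xs) (auto simp: bscale_def)

lemma fsum_Fbox:
  "mdeg M y q m \<Longrightarrow> fsum (Fbox B' M' ds F1 F2 y) \<approx>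
    ind (bone B', F1 y) + sum_list (map (\<lambda>p. sg (m * hc p) (ind (snd p, F2 y (fst p)))) ds)"
  using fsum_bscale_Fbox[of y q m "bone B'"] by (simp add: bscale_one)

lemma fsum_bscale_boxD:
  assumes z: "mdeg M' z q m"
  shows "fsum (bscale b0 (boxD B' M' ds z)) \<approx>
    ind (b0, mdif M' z) + sum_list (map (\<lambda>p. sg (m * hc p) (ind (bmul B' b0 (snd p), mact M' z (fst p)))) ds)"
proof -
  have e: "fsum (bscale b0 (boxD B' M' ds z)) = ind (b0, mdif M' z) + sum_list (map (\<lambda>p.
      ind (bmul B' b0 (sg (hd (mdeg M') (mact M' z (fst p)) * hd (bdeg B') (snd p)) (snd p)), mact M' z (fst p))) ds)"
    by (simp add: bscale_def boxD_def fsum_Cons fsum_map split_beta o_def)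
  show ?thesis
    unfolding e
  proof (intro tequiv_add[OF tequiv_refl] tequiv_sum_list)
    fix p assume p: "p \<in> set ds"
    show "ind (bmul B' b0 (sg (hd (mdeg M') (mact M' z (fst p)) * hd (bdeg B') (snd p)) (snd p)), mact M' z (fst p))
        \<approx> sg (m * hc p) (ind (bmul B' b0 (snd p), mact M' z (fst p)))"
      unfolding B'.mul_sg_right
    proof (rule ind_sg_left_parity)
      assume "bmul B' b0 (snd p) \<noteq> 0" and za: "mact M' z (fst p) \<noteq> 0"
      then have "hd (bdeg B') (snd p) = hc p" using hd_c[OF p] by fastforce
      moreover have "hd (mdeg M') (mact M' z (fst p)) = m + 1 - hc p"
        using M'.hd_eq[OF M'.act_deg[OF z deg_a[OF p]] za] by simp
      ultimately show "even (hd (mdeg M') (mact M' z (fst p)) * hd (bdeg B') (snd p) - m * hc p)"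
        by auto
    qed
  qed
qed

lemma fsum_dif_Fbox:
  assumes x: "mdeg M x q n"
  shows "fsum (map (\<lambda>(b, z). (bdif B' b, sg (hd (mdeg M') z) z)) (Fbox B' M' ds F1 F2 x)) \<approx>
    sum_list (map (\<lambda>p. sg (n * hc p + n + hc p) (ind (bdif B' (snd p), F2 x (fst p)))) ds)"
proof -
  have e: "fsum (map (\<lambda>(b, z). (bdif B' b, sg (hd (mdeg M') z) z)) (Fbox B' M' ds F1 F2 x)) =
      ind (0, sg (hd (mdeg M') (F1 x)) (F1 x)) + sum_list (map (\<lambda>p.
        ind (bdif B' (sg (hd (bdeg B') (snd p) * (1 + hd (mdeg M') (F2 x (fst p)))) (snd p)),
          sg (hd (mdeg M') (F2 x (fst p))) (F2 x (fst p)))) ds)"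
    by (simp add: Fbox_def fsum_Cons fsum_map B'.dif_one split_beta o_def)
  have "\<dots> \<approx> 0 + sum_list (map (\<lambda>p. sg (n * hc p + n + hc p) (ind (bdif B' (snd p), F2 x (fst p)))) ds)"
  proof (intro tequiv_add[OF ind_zero_left] tequiv_sum_list)
    fix p assume p: "p \<in> set ds"
    show "ind (bdif B' (sg (hd (bdeg B') (snd p) * (1 + hd (mdeg M') (F2 x (fst p)))) (snd p)),
          sg (hd (mdeg M') (F2 x (fst p))) (F2 x (fst p)))
        \<approx> sg (n * hc p + n + hc p) (ind (bdif B' (snd p), F2 x (fst p)))"
      unfolding B'.dif_sg
    proof (rule ind_sg_both_parity)
      assume "bdif B' (snd p) \<noteq> 0" and F2: "F2 x (fst p) \<noteq> 0"
      then have "hd (bdeg B') (snd p) = hc p" using hd_c[OF p] by fastforce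
      moreover have "hd (mdeg M') (F2 x (fst p)) = n - hc p"
        using M'.hd_eq[OF F2_deg[OF x deg_a[OF p]] F2] by simp
      ultimately show "even (hd (bdeg B') (snd p) * (1 + hd (mdeg M') (F2 x (fst p)))
          + hd (mdeg M') (F2 x (fst p)) - (n * hc p + n + hc p))"
        by auto
    qed
  qed
  then show ?thesis unfolding e by simp
qed

lemma fsum_bscale_Fbox_act:
  assumes x: "mdeg M x q n" and s: "s \<in> set ds"
  defines "e \<equiv> hd (mdeg M) (mact M x (fst s)) * hd (bdeg B') (snd s)"
  shows "fsum (bscale (sg e (snd s)) (Fbox B' M' ds F1 F2 (mact M x (fst s)))) \<approx>
    sg (n * hc s) (ind (snd s, F1 (mact M x (fst s)))) + sum_list (map (\<lambda>t.
      sg ((n + 1 - hc s) * (hc s + hc t)) (ind (bmul B' (snd s) (snd t), F2 (mact M x (fst s)) (fst t)))) ds)"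
proof -
  let ?xa = "mact M x (fst s)"
  have xa: "mdeg M ?xa (q - qc s) (n + 1 - hc s)"
    using M.act_deg[OF x deg_a[OF s]] by (simp add: add_diff_eq)
  have e: "e = (n + 1 - hc s) * hc s" if "?xa \<noteq> 0" "snd s \<noteq> 0"
    using M.hd_eq[OF xa] hd_c[OF s] that by (simp add: e_def)
  have "fsum (bscale (sg e (snd s)) (Fbox B' M' ds F1 F2 ?xa)) \<approx> ind (sg e (snd s), F1 ?xa)
      + sum_list (map (\<lambda>t. sg ((n + 1 - hc s) * hc t) (ind (bmul B' (sg e (snd s)) (snd t), F2 ?xa (fst t)))) ds)"
    by (rule fsum_bscale_Fbox[OF xa])
  also have "\<dots> \<approx> sg (n * hc s) (ind (snd s, F1 ?xa)) + sum_list (map (\<lambda>t.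
      sg ((n + 1 - hc s) * (hc s + hc t)) (ind (bmul B' (snd s) (snd t), F2 ?xa (fst t)))) ds)"
  proof (intro tequiv_add tequiv_sum_list)
    show "ind (sg e (snd s), F1 ?xa) \<approx> sg (n * hc s) (ind (snd s, F1 ?xa))"
    proof (rule ind_sg_left_parity)
      assume "snd s \<noteq> 0" "F1 ?xa \<noteq> 0"
      then show "even (e - n * hc s)" using e by fastforce
    qed
    fix t assume "t \<in> set ds"
    show "sg ((n + 1 - hc s) * hc t) (ind (bmul B' (sg e (snd s)) (snd t), F2 ?xa (fst t)))
        \<approx> sg ((n + 1 - hc s) * (hc s + hc t)) (ind (bmul B' (snd s) (snd t), F2 ?xa (fst t)))"
      unfolding B'.mul_sg_left
    proof (rule sg_ind_sg_left_parity)
      assume "bmul B' (snd s) (snd t) \<noteq> 0" "F2 ?xa (fst t) \<noteq> 0"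
      then show "even ((n + 1 - hc s) * hc t + e - (n + 1 - hc s) * (hc s + hc t))"
        using e by (fastforce simp: algebra_simps)
    qed
  qed
  finally show ?thesis .
qed

lemma fsum_Fbox_after_boxD:
  assumes x: "mdeg M x q n"
  shows "fsum (concat (map (\<lambda>(c, y). bscale c (Fbox B' M' ds F1 F2 y)) (boxD B' M ds x))) \<approx>
    (ind (bone B', F1 (mdif M x)) + sum_list (map (\<lambda>t. sg ((n + 1) * hc t) (ind (snd t, F2 (mdif M x) (fst t)))) ds))
    + sum_list (map (\<lambda>s. sg (n * hc s) (ind (snd s, F1 (mact M x (fst s)))) + sum_list (map (\<lambda>t.
        sg ((n + 1 - hc s) * (hc s + hc t)) (ind (bmul B' (snd s) (snd t), F2 (mact M x (fst s)) (fst t)))) ds)) ds)"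
proof -
  have e: "fsum (concat (map (\<lambda>(c, y). bscale c (Fbox B' M' ds F1 F2 y)) (boxD B' M ds x)))
    = fsum (Fbox B' M' ds F1 F2 (mdif M x)) + sum_list (map (\<lambda>s. fsum (bscale
        (sg (hd (mdeg M) (mact M x (fst s)) * hd (bdeg B') (snd s)) (snd s))
        (Fbox B' M' ds F1 F2 (mact M x (fst s))))) ds)"
    by (simp add: boxD_def fsum_concat fsum_append bscale_one split_beta o_def)
  show ?thesis
    unfolding e
    by (intro tequiv_add fsum_Fbox[OF M.dif_deg[OF x]] tequiv_sum_list fsum_bscale_Fbox_act[OF x])
qed

lemma fsum_bscale_boxD_F2:
  assumes x: "mdeg M x q n" and s: "s \<in> set ds"
  defines "e \<equiv> hd (bdeg B') (snd s) * (1 + hd (mdeg M') (F2 x (fst s)))"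
  shows "fsum (bscale (sg e (snd s)) (boxD B' M' ds (F2 x (fst s)))) \<approx>
    sg (n * hc s) (ind (snd s, mdif M' (F2 x (fst s)))) + sum_list (map (\<lambda>t.
      sg (n * hc s + (n - hc s) * hc t) (ind (bmul B' (snd s) (snd t), mact M' (F2 x (fst s)) (fst t)))) ds)"
proof -
  let ?z = "F2 x (fst s)"
  have z: "mdeg M' ?z (q - qc s) (n - hc s)"
    using F2_deg[OF x deg_a[OF s]] by simp
  have e: "e = hc s * (1 + n - hc s)" if "?z \<noteq> 0" "snd s \<noteq> 0"
    using M'.hd_eq[OF z] hd_c[OF s] that by (simp add: e_def)
  have "fsum (bscale (sg e (snd s)) (boxD B' M' ds ?z)) \<approx> ind (sg e (snd s), mdif M' ?z)
      + sum_list (map (\<lambda>t. sg ((n - hc s) * hc t) (ind (bmul B' (sg e (snd s)) (snd t), mact M' ?z (fst t)))) ds)"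
    by (rule fsum_bscale_boxD[OF z])
  also have "\<dots> \<approx> sg (n * hc s) (ind (snd s, mdif M' ?z)) + sum_list (map (\<lambda>t.
      sg (n * hc s + (n - hc s) * hc t) (ind (bmul B' (snd s) (snd t), mact M' ?z (fst t)))) ds)"
  proof (intro tequiv_add tequiv_sum_list)
    show "ind (sg e (snd s), mdif M' ?z) \<approx> sg (n * hc s) (ind (snd s, mdif M' ?z))"
    proof (rule ind_sg_left_parity)
      assume "snd s \<noteq> 0" "mdif M' ?z \<noteq> 0"
      then show "even (e - n * hc s)" using e by fastforce
    qed
    fix t assume "t \<in> set ds"
    show "sg ((n - hc s) * hc t) (ind (bmul B' (sg e (snd s)) (snd t), mact M' ?z (fst t)))
        \<approx> sg (n * hc s + (n - hc s) * hc t) (ind (bmul B' (snd s) (snd t), mact M' ?z (fst t)))"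
      unfolding B'.mul_sg_left
    proof (rule sg_ind_sg_left_parity)
      assume "bmul B' (snd s) (snd t) \<noteq> 0" "mact M' ?z (fst t) \<noteq> 0"
      then show "even ((n - hc s) * hc t + e - (n * hc s + (n - hc s) * hc t))"
        using e by (fastforce simp: algebra_simps)
    qed
  qed
  finally show ?thesis .
qed

lemma fsum_boxD_after_Fbox:
  assumes x: "mdeg M x q n"
  shows "fsum (concat (map (\<lambda>(b, z). bscale b (boxD B' M' ds z)) (Fbox B' M' ds F1 F2 x))) \<approx>
    (ind (bone B', mdif M' (F1 x)) + sum_list (map (\<lambda>t. sg (n * hc t) (ind (snd t, mact M' (F1 x) (fst t)))) ds))
    + sum_list (map (\<lambda>s. sg (n * hc s) (ind (snd s, mdif M' (F2 x (fst s)))) + sum_list (map (\<lambda>t.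
        sg (n * hc s + (n - hc s) * hc t) (ind (bmul B' (snd s) (snd t), mact M' (F2 x (fst s)) (fst t)))) ds)) ds)"
proof -
  have e: "fsum (concat (map (\<lambda>(b, z). bscale b (boxD B' M' ds z)) (Fbox B' M' ds F1 F2 x)))
    = fsum (bscale (bone B') (boxD B' M' ds (F1 x))) + sum_list (map (\<lambda>s. fsum (bscale
        (sg (hd (bdeg B') (snd s) * (1 + hd (mdeg M') (F2 x (fst s)))) (snd s))
        (boxD B' M' ds (F2 x (fst s))))) ds)"
    by (simp add: Fbox_def fsum_concat fsum_append split_beta o_def)
  show ?thesis
    unfolding e
    using fsum_bscale_boxD[OF F1_deg[OF x], of "bone B'"]
    by (intro tequiv_add tequiv_sum_list fsum_bscale_boxD_F2[OF x]) simp
qed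

definition dd_transfer :: "int \<Rightarrow> 'a \<Rightarrow> 'b \<times> 'c \<Rightarrow> ('c \<times> 'd \<Rightarrow> int)" where
  "dd_transfer m x p = ind (grade_sign_pow (bdeg B') m (snd p), F2 x (fst p))"

lemma teq_dd_transfer:
  assumes "teq k (\<lambda>a i. bmul B a (bidm B i)) (\<lambda>i c. bmul B' c (bidm B' i)) L1 L2"
  shows "sum_list (map (dd_transfer m x) L1) \<approx> sum_list (map (dd_transfer m x) L2)"
proof (rule tequiv_lin_ext[OF assms])
  fix a a' c
  show "dd_transfer m x (a + a', c) - dd_transfer m x (a, c) - dd_transfer m x (a', c)
      \<in> trel k (\<lambda>c i. bmul B' c (bidm B' i)) (\<lambda>i y. mact M' y (bidm B i))"
    by (simp add: dd_transfer_def F2_add_right trel_addr)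
next
  fix a c c'
  show "dd_transfer m x (a, c + c') - dd_transfer m x (a, c) - dd_transfer m x (a, c')
      \<in> trel k (\<lambda>c i. bmul B' c (bidm B' i)) (\<lambda>i y. mact M' y (bidm B i))"
    by (simp add: dd_transfer_def grade_sign_pow_add[OF B'.bigraded] trel_addl)
next
  fix i a c assume i: "i < k"
  let ?c = "grade_sign_pow (bdeg B') m c"
  have "grade_sign_pow (bdeg B') m (bmul B' c (bidm B' i)) = bmul B' ?c (bidm B' i)"
    using B'.mul_deg[OF _ B'.idm_deg[OF i]]
    by (intro grade_sign_pow_natural[OF B'.bigraded B'.additive_mul_left]) simp
  then show "dd_transfer m x (bmul B a (bidm B i), c) - dd_transfer m x (a, bmul B' c (bidm B' i))
      \<in> trel k (\<lambda>c i. bmul B' c (bidm B' i)) (\<lambda>i y. mact M' y (bidm B i))"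
    using trel_neg[OF trel_bal[OF i, of "\<lambda>c i. bmul B' c (bidm B' i)" ?c "F2 x a"]]
    by (simp add: dd_transfer_def F2_idm_right[OF i])
qed

lemma dd_structure_transfer:
  assumes x: "mdeg M x q n"
  shows "sum_list (map (\<lambda>s. sg (n * hc s) (ind (snd s, F2 x (bdif B (fst s))))) ds)
    + sum_list (map (\<lambda>s. sg (n * hc s + n + hc s + 1) (ind (bdif B' (snd s), F2 x (fst s)))) ds)
    + sum_list (map (\<lambda>s. sum_list (map (\<lambda>t. sg ((n + 1 - hc s) * (hc s + hc t))
        (ind (bmul B' (snd s) (snd t), F2 x (bmul B (fst s) (fst t))))) ds)) ds) \<approx> 0"
proof -
  let ?G = "dd_transfer (n + 1) x"
  have "sum_list (map (\<lambda>s. sg (n * hc s) (ind (snd s, F2 x (bdif B (fst s))))) ds)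
    + sum_list (map (\<lambda>s. sg (n * hc s + n + hc s + 1) (ind (bdif B' (snd s), F2 x (fst s)))) ds)
    + sum_list (map (\<lambda>s. sum_list (map (\<lambda>t. sg ((n + 1 - hc s) * (hc s + hc t))
        (ind (bmul B' (snd s) (snd t), F2 x (bmul B (fst s) (fst t))))) ds)) ds)
    \<approx> sum_list (map (\<lambda>s. ?G (sg (hd (bdeg B') (snd s)) (bdif B (fst s)), snd s)) ds)
    + sum_list (map (\<lambda>s. ?G (fst s, bdif B' (snd s))) ds)
    + sum_list (map (\<lambda>s. sum_list (map (\<lambda>t. ?G (sg (hd (bdeg B) (fst t) * hd (bdeg B') (snd s))
        (bmul B (fst s) (fst t)), bmul B' (snd s) (snd t))) ds)) ds)"
  proof (intro tequiv_add tequiv_sum_list; rule tequiv_sym)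
    fix s assume s: "s \<in> set ds"
    show "?G (sg (hd (bdeg B') (snd s)) (bdif B (fst s)), snd s)
      \<approx> sg (n * hc s) (ind (snd s, F2 x (bdif B (fst s))))"
      unfolding dd_transfer_def fst_conv snd_conv grade_sign_pow_hom[OF B'.bigraded deg_c[OF s]] F2_sg_right
      by (rule ind_sg_both_parity) (simp add: hd_c[OF s] algebra_simps)
    show "?G (fst s, bdif B' (snd s)) \<approx> sg (n * hc s + n + hc s + 1) (ind (bdif B' (snd s), F2 x (fst s)))"
      unfolding dd_transfer_def fst_conv snd_conv grade_sign_pow_hom[OF B'.bigraded B'.dif_deg[OF deg_c[OF s]]]
      by (rule ind_sg_left_parity) (simp add: algebra_simps)
    fix t assume t: "t \<in> set ds"
    have c: "bdeg B' (bmul B' (snd s) (snd t)) (qc s + qc t) (hc s + hc t)"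
      by (rule B'.mul_deg[OF deg_c[OF s] deg_c[OF t]])
    show "?G (sg (hd (bdeg B) (fst t) * hd (bdeg B') (snd s)) (bmul B (fst s) (fst t)), bmul B' (snd s) (snd t))
      \<approx> sg ((n + 1 - hc s) * (hc s + hc t)) (ind (bmul B' (snd s) (snd t), F2 x (bmul B (fst s) (fst t))))"
      unfolding dd_transfer_def fst_conv snd_conv grade_sign_pow_hom[OF B'.bigraded c] F2_sg_right
    proof (rule ind_sg_both_parity)
      assume "bmul B' (snd s) (snd t) \<noteq> 0" "F2 x (bmul B (fst s) (fst t)) \<noteq> 0"
      then have "snd s \<noteq> 0" "fst t \<noteq> 0" by auto
      then show "even ((n + 1) * (hc s + hc t) + hd (bdeg B) (fst t) * hd (bdeg B') (snd s)
          - (n + 1 - hc s) * (hc s + hc t))"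
        by (simp add: hd_c[OF s] hd_a[OF t] algebra_simps)
    qed
  qed
  also have "\<dots> = sum_list (map ?G (map (\<lambda>(a, c). (sg (hd (bdeg B') c) (bdif B a), c)) ds @
      map (\<lambda>(a, c). (a, bdif B' c)) ds @
      concat (map (\<lambda>(a, c). map (\<lambda>(a', c').
        (sg (hd (bdeg B) a' * hd (bdeg B') c) (bmul B a a'), bmul B' c c')) ds) ds)))"
    by (simp add: map_concat sum_list_concat split_beta o_def add.assoc)
  also have "\<dots> \<approx> 0"
    using teq_dd_transfer[OF dd_structure] by simp
  finally show ?thesis .
qed

lemma ainf_rel2_tensor:
  assumes s: "s \<in> set ds"
  shows "ind (c, mdif M' (F2 x (fst s))) + ind (c, mact M' (F1 x) (fst s)) \<approx>
    ind (c, F1 (mact M x (fst s))) - sg (1 - hc s) (ind (c, F2 (mdif M x) (fst s)))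
    - ind (c, F2 x (bdif B (fst s)))"
proof -
  let ?a = "fst s"
  have "ind (c, mdif M' (F2 x ?a)) + ind (c, mact M' (F1 x) ?a) \<approx> ind (c, mdif M' (F2 x ?a) + mact M' (F1 x) ?a)"
    by (rule tequiv_sym[OF ind_add_right])
  also have "\<dots> = ind (c, F1 (mact M x ?a) - sg (1 - hc s) (F2 (mdif M x) ?a) - F2 x (bdif B ?a))"
    by (simp add: ainf_rel2[OF deg_a[OF s]] F2_sg_right)
  also have "\<dots> \<approx> ind (c, F1 (mact M x ?a) - sg (1 - hc s) (F2 (mdif M x) ?a)) - ind (c, F2 x (bdif B ?a))"
    by (rule ind_diff_right)
  also have "\<dots> \<approx> ind (c, F1 (mact M x ?a)) - sg (1 - hc s) (ind (c, F2 (mdif M x) ?a)) - ind (c, F2 x (bdif B ?a))"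
    by (intro tequiv_diff[OF _ tequiv_refl] tequiv_trans[OF ind_diff_right] tequiv_diff[OF tequiv_refl ind_sg_right])
  finally show ?thesis .
qed

lemma ainf_rel3_tensor:
  assumes t: "t \<in> set ds"
  shows "ind (c, F2 (mact M x a) (fst t)) \<approx>
    ind (c, F2 x (bmul B a (fst t))) - sg (1 - hc t) (ind (c, mact M' (F2 x a) (fst t)))"
proof -
  have "F2 (mact M x a) (fst t) = F2 x (bmul B a (fst t)) - sg (1 - hc t) (mact M' (F2 x a) (fst t))"
    using ainf_rel3[OF deg_a[OF t], of x a] by (simp add: M'.act_sg_right algebra_simps)
  then have "ind (c, F2 (mact M x a) (fst t)) \<approx>
      ind (c, F2 x (bmul B a (fst t))) - ind (c, sg (1 - hc t) (mact M' (F2 x a) (fst t)))"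
    by (simp add: ind_diff_right)
  also have "\<dots> \<approx> ind (c, F2 x (bmul B a (fst t))) - sg (1 - hc t) (ind (c, mact M' (F2 x a) (fst t)))"
    by (rule tequiv_diff[OF tequiv_refl ind_sg_right])
  finally show ?thesis .
qed

lemma Fbox_structure_equation:
  assumes x: "mdeg M x q n"
  shows "fsum (map (\<lambda>(b, z). (bdif B' b, sg (hd (mdeg M') z) z)) (Fbox B' M' ds F1 F2 x)) \<approx>
    fsum (concat (map (\<lambda>(c, y). bscale c (Fbox B' M' ds F1 F2 y)) (boxD B' M ds x)) @
      tneg (concat (map (\<lambda>(b, z). bscale b (boxD B' M' ds z)) (Fbox B' M' ds F1 F2 x))))"
proof -
  let ?expansion = "(ind (bone B', F1 (mdif M x))
      + sum_list (map (\<lambda>t. sg ((n + 1) * hc t) (ind (snd t, F2 (mdif M x) (fst t)))) ds))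
    + sum_list (map (\<lambda>s. sg (n * hc s) (ind (snd s, F1 (mact M x (fst s)))) + sum_list (map (\<lambda>t.
        sg ((n + 1 - hc s) * (hc s + hc t)) (ind (bmul B' (snd s) (snd t), F2 (mact M x (fst s)) (fst t)))) ds)) ds)
    + - ((ind (bone B', F1 (mdif M x)) + sum_list (map (\<lambda>t. sg (n * hc t) (ind (snd t, mact M' (F1 x) (fst t)))) ds))
    + sum_list (map (\<lambda>s. sg (n * hc s) (ind (snd s, mdif M' (F2 x (fst s)))) + sum_list (map (\<lambda>t.
        sg (n * hc s + (n - hc s) * hc t) (ind (bmul B' (snd s) (snd t), mact M' (F2 x (fst s)) (fst t)))) ds)) ds))"
  have "fsum (concat (map (\<lambda>(c, y). bscale c (Fbox B' M' ds F1 F2 y)) (boxD B' M ds x)) @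
      tneg (concat (map (\<lambda>(b, z). bscale b (boxD B' M' ds z)) (Fbox B' M' ds F1 F2 x)))) \<approx> ?expansion"
    unfolding fsum_append
    using tequiv_add[OF fsum_Fbox_after_boxD[OF x]
        tequiv_trans[OF fsum_tneg tequiv_neg[OF fsum_boxD_after_Fbox[OF x]]]]
    by (simp only: F1_chain)
  moreover have "sum_list (map (\<lambda>s. sg (n * hc s + n + hc s) (ind (bdif B' (snd s), F2 x (fst s)))) ds) \<approx>
      ?expansion"
    by (rule tequiv_expansion_cancel[OF ainf_rel2_tensor ainf_rel3_tensor dd_structure_transfer[OF x]])
  ultimately show ?thesis
    using fsum_dif_Fbox[OF x] tequiv_trans tequiv_sym by meson
qed

lemma Fbox_add:
  assumes x: "mdeg M x q n" and y: "mdeg M y q n"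
  shows "fsum (Fbox B' M' ds F1 F2 (x + y)) \<approx> fsum (Fbox B' M' ds F1 F2 x @ Fbox B' M' ds F1 F2 y)"
proof -
  let ?sum = "\<lambda>x. sum_list (map (\<lambda>p. sg (n * hc p) (ind (snd p, F2 x (fst p)))) ds)"
  have "fsum (Fbox B' M' ds F1 F2 (x + y)) \<approx> ind (bone B', F1 (x + y)) + ?sum (x + y)"
    by (rule fsum_Fbox[OF bigraded_add[OF M.bigraded x y]])
  also have "\<dots> \<approx> (ind (bone B', F1 x) + ind (bone B', F1 y)) + (?sum x + ?sum y)"
    unfolding F1_add F2_add_left sum_list_addf[symmetric] sg_add[symmetric]
    by (intro tequiv_add ind_add_right tequiv_sum_list tequiv_sg)
  also have "\<dots> = (ind (bone B', F1 x) + ?sum x) + (ind (bone B', F1 y) + ?sum y)"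
    by (simp add: algebra_simps)
  also have "\<dots> \<approx> fsum (Fbox B' M' ds F1 F2 x) + fsum (Fbox B' M' ds F1 F2 y)"
    by (intro tequiv_add tequiv_sym[OF fsum_Fbox[OF x]] tequiv_sym[OF fsum_Fbox[OF y]])
  finally show ?thesis by (simp add: fsum_append)
qed

lemma Fbox_idm:
  assumes i: "i < k" and x: "mdeg M x q n"
  shows "fsum (Fbox B' M' ds F1 F2 (mact M x (bidm B i))) \<approx> fsum (bscale (bidm B' i) (Fbox B' M' ds F1 F2 x))"
proof -
  let ?xi = "mact M x (bidm B i)"
  have xi: "mdeg M ?xi q n" using M.act_deg[OF x B.idm_deg[OF i]] by simp
  have "fsum (Fbox B' M' ds F1 F2 ?xi) \<approx> ind (bone B', F1 ?xi)
      + sum_list (map (\<lambda>p. sg (n * hc p) (ind (snd p, F2 ?xi (fst p)))) ds)"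
    by (rule fsum_Fbox[OF xi])
  also have "\<dots> \<approx> ind (bidm B' i, F1 x)
      + sum_list (map (\<lambda>p. sg (n * hc p) (ind (bmul B' (bidm B' i) (snd p), F2 x (fst p)))) ds)"
  proof (rule tequiv_add)
    show "ind (bone B', F1 ?xi) \<approx> ind (bidm B' i, F1 x)"
      using tequiv_sym[OF ind_balanced[OF i, where ra = "\<lambda>c i. bmul B' c (bidm B' i)" and m = "bone B'"
          and la = "\<lambda>i y. mact M' y (bidm B i)" and n = "F1 x"]]
      by (simp add: F1_idm[OF i])
    have "sum_list (map (\<lambda>p. sg (n * hc p) (ind (snd p, F2 ?xi (fst p)))) ds)
        \<approx> sum_list (map (\<lambda>p. dd_transfer n x (bmul B (bidm B i) (fst p), snd p)) ds)"
      by (rule tequiv_sum_list, rule tequiv_sym)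
        (simp add: dd_transfer_def F2_idm_left[OF i] grade_sign_pow_hom[OF B'.bigraded deg_c] ind_sg_left)
    also have "\<dots> \<approx> sum_list (map (\<lambda>p. dd_transfer n x (fst p, bmul B' (bidm B' i) (snd p))) ds)"
      using teq_dd_transfer[OF dd_idm[OF i], of n x] by (simp add: split_beta o_def)
    also have "\<dots> \<approx> sum_list (map (\<lambda>p. sg (n * hc p) (ind (bmul B' (bidm B' i) (snd p), F2 x (fst p)))) ds)"
    proof (rule tequiv_sum_list)
      fix p assume p: "p \<in> set ds"
      have "bdeg B' (bmul B' (bidm B' i) (snd p)) (qc p) (hc p)"
        using B'.mul_deg[OF B'.idm_deg[OF i] deg_c[OF p]] by simp
      then show "dd_transfer n x (fst p, bmul B' (bidm B' i) (snd p))
          \<approx> sg (n * hc p) (ind (bmul B' (bidm B' i) (snd p), F2 x (fst p)))"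
        by (simp add: dd_transfer_def grade_sign_pow_hom[OF B'.bigraded] ind_sg_left)
    qed
    finally show "sum_list (map (\<lambda>p. sg (n * hc p) (ind (snd p, F2 ?xi (fst p)))) ds)
        \<approx> sum_list (map (\<lambda>p. sg (n * hc p) (ind (bmul B' (bidm B' i) (snd p), F2 x (fst p)))) ds)" .
  qed
  also have "\<dots> \<approx> fsum (bscale (bidm B' i) (Fbox B' M' ds F1 F2 x))"
    by (rule tequiv_sym[OF fsum_bscale_Fbox[OF x]])
  finally show ?thesis .
qed

lemma Fbox_homogeneous:
  assumes x: "mdeg M x q h" and bz: "(b, z) \<in> set (Fbox B' M' ds F1 F2 x)"
  shows "\<exists>q1 h1 q2 h2. bdeg B' b q1 h1 \<and> mdeg M' z q2 h2 \<and> q1 + q2 = q \<and> h1 + h2 = h"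
proof -
  from bz consider "b = bone B'" "z = F1 x"
    | p where "p \<in> set ds" "b = sg (hd (bdeg B') (snd p) * (1 + hd (mdeg M') (F2 x (fst p)))) (snd p)"
        "z = F2 x (fst p)"
    unfolding Fbox_def by auto
  then show ?thesis
  proof cases
    case 1
    then show ?thesis using B'.one_deg F1_deg[OF x] by fastforce
  next
    case (2 p)
    have "bdeg B' b (qc p) (hc p)"
      using bigraded_sg[OF B'.bigraded deg_c[OF 2(1)]] 2(2) by simp
    moreover have "mdeg M' z (q - qc p) (h - hc p)"
      using F2_deg[OF x deg_a[OF 2(1)]] 2(3) by simp
    ultimately show ?thesis by fastforce
  qed
qed

end


theorem proposition6p50:
  fixes k :: nat
    and B :: "('b::ab_group_add) dgba" and B' :: "('c::ab_group_add) dgba"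
    and M :: "('a::ab_group_add, 'b) dgmod" and M' :: "('d::ab_group_add, 'b) dgmod"
    and ds :: "('b \<times> 'c) list"
    and F1 :: "'a \<Rightarrow> 'd" and F2 :: "'a \<Rightarrow> 'b \<Rightarrow> 'd"
  assumes "dg_algebra k B" and "dg_algebra k B'"
    and "dg_module k B M" and "dg_module k B M'"
    and "free_homog_basis k B M" and "free_homog_basis k B M'"
    and "rank_one_DD k B B' ds"
    and "ainf_morphism k B M M' F1 F2"
  shows "typeD_morphism k B B' M M' (boxD B' M ds) (boxD B' M' ds) (Fbox B' M' ds F1 F2)"
proof -
  interpret box_setting k B B' M M' F1 F2 ds
    using assms by (simp add: box_setting_def dg_alg_if_dg_algebra dg_mod_if_dg_module
        ainf_mor_if_ainf_morphism rank_one_dd_if_rank_one_DD)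
  show ?thesis
    unfolding typeD_morphism_def Let_def teq_iff_tequiv bscale_def[symmetric]
    using Fbox_add Fbox_idm Fbox_homogeneous Fbox_structure_equation by blast
qed

end
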